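(* Let $\mathcal X,\mathcal Y$ be finite or countably infinite, $n\in\mathbb N$, and for $i=1,\dots,n$ let $P_{X_i},Q_{X_i}$ be probability mass functions with full support on $\mathcal X$ and $W_{Y_i|X_i}$ stochastic transformations from $\mathcal X$ to $\mathcal Y$. Let $P_{X^n}=\prod_iP_{X_i}$, $Q_{X^n}=\prod_iQ_{X_i}$, $W_{Y^n|X^n}(\underline y|\underline x)=\prod_iW_{Y_i|X_i}(y_i|x_i)$, and for $\lambda\in[0,1]$ let $R^{(\lambda)}_{X^n}(\underline x)=\prod_{i=1}^n(\lambda P_{X_i}(x_i)+(1-\lambda)Q_{X_i}(x_i))$. Let $R_{Y^n}^{(\lambda)}:=R_{X^n}^{(\lambda)}W_{Y^n|X^n}$, $Q_{Y^n}:=Q_{X^n}W_{Y^n|X^n}$, $P_{Y_i}:=P_{X_i}W_{Y_i|X_i}$, $Q_{Y_i}:=Q_{X_i}W_{Y_i|X_i}$. Let $f:(0,\infty)\to\mathbb R$ be convex and twice differentiable with $f(1)=0$, and let $$\xi_1(n,\lambda):=\prod_{i=1}^n\Big(1-\lambda+\lambda\inf_{x}\tfrac{P_{X_i}(x)}{Q_{X_i}(x)}\Big),\qquad \xi_2(n,\lambda):=\prod_{i=1}^n\Big(1-\lambda+\lambda\sup_x\tfrac{P_{X_i}(x)}{Q_{X_i}(x)}\Big).$$ Then: (a) for all $\lambda\in[0,1]$, $$D_f(R^{(\lambda)}_{X^n}\|Q_{X^n})-D_f(R^{(\lambda)}_{Y^n}\|Q_{Y^n})\ge c_f(\xi_1(n,\lambda),\xi_2(n,\lambda))\Big[\prod_{i=1}^n(1+\lambda^2\chi^2(P_{X_i}\|Q_{X_i}))-\prod_{i=1}^n(1+\lambda^2\chi^2(P_{Y_i}\|Q_{Y_i}))\Big]$$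 $$\ge c_f(\xi_1(n,\lambda),\xi_2(n,\lambda))\,\lambda^2\sum_{i=1}^n[\chi^2(P_{X_i}\|Q_{X_i})-\chi^2(P_{Y_i}\|Q_{Y_i})]\ge0;$$ (b) for all $\lambda\in[0,1]$, $$D_f(R^{(\lambda)}_{X^n}\|Q_{X^n})-D_f(R^{(\lambda)}_{Y^n}\|Q_{Y^n})\le e_f(\xi_1(n,\lambda),\xi_2(n,\lambda))\Big[\prod_{i=1}^n(1+\lambda^2\chi^2(P_{X_i}\|Q_{X_i}))-\prod_{i=1}^n(1+\lambda^2\chi^2(P_{Y_i}\|Q_{Y_i}))\Big];$$ (c) if $f$ has a continuous second derivative at $1$ and $\sup_x P_{X_i}(x)/Q_{X_i}(x)<\infty$ for all $i$, then $$\lim_{\lambda\to0^+}\frac{D_f(R^{(\lambda)}_{X^n}\|Q_{X^n})-D_f(R^{(\lambda)}_{Y^n}\|Q_{Y^n})}{\lambda^2}=\tfrac12f''(1)\sum_{i=1}^n[\chi^2(P_{X_i}\|Q_{X_i})-\chi^2(P_{Y_i}\|Q_{Y_i})],$$ and the lower bounds in (a) and the upper bound in (b), divided by $\lambda^2$, also converge to this limit as $\lambda\to0^+$.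
   Context: $D_f(P\|Q):=\sum_xQ(x)f(P(x)/Q(x))$ is the $f$-divergence and $\chi^2(P\|Q):=\sum_x(P(x)-Q(x))^2/Q(x)$. For $\xi_1\le1\le\xi_2$, with $\mathcal I(\xi_1,\xi_2):=[\xi_1,\xi_2]\cap(0,\infty)$, define $c_f(\xi_1,\xi_2):=\tfrac12\inf_{t\in\mathcal I(\xi_1,\xi_2)}f''(t)$ and $e_f(\xi_1,\xi_2):=\tfrac12\sup_{t\in\mathcal I(\xi_1,\xi_2)}f''(t)$. *)

theory Defs
  imports "HOL-Analysis.Analysis"
begin

definition is_pmf :: "('a \<Rightarrow> real) \<Rightarrow> bool" where
  "is_pmf P \<longleftrightarrow> (\<forall>x. 0 \<le> P x) \<and> (P has_sum 1) UNIV"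

text \<open>f-divergence and chi-square divergence over a (countable) support set A.
  Terms with Q x = 0 contribute 0 (then also P x = 0 in all uses).\<close>
definition fdiv :: "(real \<Rightarrow> real) \<Rightarrow> ('a \<Rightarrow> real) \<Rightarrow> ('a \<Rightarrow> real) \<Rightarrow> 'a set \<Rightarrow> real" where
  "fdiv f P Q A = (\<Sum>\<^sub>\<infinity>x\<in>A. Q x * f (P x / Q x))"

definition chi2 :: "('a \<Rightarrow> real) \<Rightarrow> ('a \<Rightarrow> real) \<Rightarrow> 'a set \<Rightarrow> real" where
  "chi2 P Q A = (\<Sum>\<^sub>\<infinity>x\<in>A. (P x - Q x)\<^sup>2 / Q x)"

definition chan_out :: "('a \<Rightarrow> real) \<Rightarrow> ('a \<Rightarrow> 'b \<Rightarrow> real) \<Rightarrow> 'a set \<Rightarrow> 'b \<Rightarrow> real" where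
  "chan_out P W A = (\<lambda>y. \<Sum>\<^sub>\<infinity>x\<in>A. P x * W x y)"

text \<open>Sequences of length n (indices 0..n-1 stand for 1..n).\<close>
definition seqs :: "nat \<Rightarrow> 'a list set" where
  "seqs n = {xs. length xs = n}"

definition prodX :: "nat \<Rightarrow> (nat \<Rightarrow> 'a \<Rightarrow> real) \<Rightarrow> 'a list \<Rightarrow> real" where
  "prodX n P = (\<lambda>xs. \<Prod>i<n. P i (xs ! i))"

definition chanN :: "nat \<Rightarrow> (nat \<Rightarrow> 'a \<Rightarrow> 'b \<Rightarrow> real) \<Rightarrow> 'a list \<Rightarrow> 'b list \<Rightarrow> real" where
  "chanN n W = (\<lambda>xs ys. \<Prod>i<n. W i (xs ! i) (ys ! i))"

definition Rlam :: "nat \<Rightarrow> real \<Rightarrow> (nat \<Rightarrow> 'a \<Rightarrow> real) \<Rightarrow> (nat \<Rightarrow> 'a \<Rightarrow> real) \<Rightarrow> 'a list \<Rightarrow> real" where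
  "Rlam n l P Q = (\<lambda>xs. \<Prod>i<n. l * P i (xs ! i) + (1 - l) * Q i (xs ! i))"

definition deriv2 :: "(real \<Rightarrow> real) \<Rightarrow> real \<Rightarrow> real" where
  "deriv2 f = deriv (deriv f)"

text \<open>xi_1 (a real, since the infimum of positive ratios is finite) and xi_2 (extended real,
  since the supremum may be infinite).\<close>
definition xi1 :: "nat \<Rightarrow> real \<Rightarrow> (nat \<Rightarrow> 'a \<Rightarrow> real) \<Rightarrow> (nat \<Rightarrow> 'a \<Rightarrow> real) \<Rightarrow> ereal" where
  "xi1 n l P Q = ereal (\<Prod>i<n. 1 - l + l * (INF x. P i x / Q i x))"

definition xi2 :: "nat \<Rightarrow> real \<Rightarrow> (nat \<Rightarrow> 'a \<Rightarrow> real) \<Rightarrow> (nat \<Rightarrow> 'a \<Rightarrow> real) \<Rightarrow> ereal" where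
  "xi2 n l P Q = (\<Prod>i<n. ereal (1 - l) + ereal l * (SUP x. ereal (P i x / Q i x)))"

definition Ival :: "ereal \<Rightarrow> ereal \<Rightarrow> real set" where
  "Ival a b = {t. 0 < t \<and> a \<le> ereal t \<and> ereal t \<le> b}"

definition c_f :: "(real \<Rightarrow> real) \<Rightarrow> ereal \<Rightarrow> ereal \<Rightarrow> real" where
  "c_f f a b = (1/2) * (INF t\<in>Ival a b. deriv2 f t)"

definition e_f :: "(real \<Rightarrow> real) \<Rightarrow> ereal \<Rightarrow> ereal \<Rightarrow> ereal" where
  "e_f f a b = ereal (1/2) * (SUP t\<in>Ival a b. ereal (deriv2 f t))"

definition Dgap :: "(real \<Rightarrow> real) \<Rightarrow> nat \<Rightarrow> real \<Rightarrow> (nat \<Rightarrow> 'a \<Rightarrow> real) \<Rightarrow> (nat \<Rightarrow> 'a \<Rightarrow> real)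
    \<Rightarrow> (nat \<Rightarrow> 'a \<Rightarrow> 'b \<Rightarrow> real) \<Rightarrow> real" where
  "Dgap f n l P Q W =
     fdiv f (Rlam n l P Q) (prodX n Q) (seqs n)
     - fdiv f (chan_out (Rlam n l P Q) (chanN n W) (seqs n))
              (chan_out (prodX n Q) (chanN n W) (seqs n)) (seqs n)"

definition chi_bracket :: "nat \<Rightarrow> real \<Rightarrow> (nat \<Rightarrow> 'a \<Rightarrow> real) \<Rightarrow> (nat \<Rightarrow> 'a \<Rightarrow> real)
    \<Rightarrow> (nat \<Rightarrow> 'a \<Rightarrow> 'b \<Rightarrow> real) \<Rightarrow> real" where
  "chi_bracket n l P Q W =
     (\<Prod>i<n. 1 + l\<^sup>2 * chi2 (P i) (Q i) UNIV)
     - (\<Prod>i<n. 1 + l\<^sup>2 * chi2 (chan_out (P i) (W i) UNIV) (chan_out (Q i) (W i) UNIV) UNIV)"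

definition chi_sum :: "nat \<Rightarrow> (nat \<Rightarrow> 'a \<Rightarrow> real) \<Rightarrow> (nat \<Rightarrow> 'a \<Rightarrow> real)
    \<Rightarrow> (nat \<Rightarrow> 'a \<Rightarrow> 'b \<Rightarrow> real) \<Rightarrow> real" where
  "chi_sum n P Q W =
     (\<Sum>i<n. chi2 (P i) (Q i) UNIV
              - chi2 (chan_out (P i) (W i) UNIV) (chan_out (Q i) (W i) UNIV) UNIV)"

end

theory Submission
  imports Defs
begin

text \<open>
  For every \<open>\<lambda>\<close> the likelihood ratio \<open>R/Q\<close> of the product mixture takes its values in
  \<open>I = I(\<xi>\<^sub>1, \<xi>\<^sub>2)\<close>, and so does the ratio of the two channel outputs, being an average of
  input ratios. On \<open>I\<close> the functions \<open>f(t) - c\<^sub>f (t - 1)\<^sup>2\<close> and \<open>e\<^sub>f (t - 1)\<^sup>2 - f(t)\<close> have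
  nonnegative second derivative, so they satisfy the data-processing inequality (conditional
  Jensen along the channel). Since the \<open>\<chi>\<^sup>2\<close>-divergence of a product mixture from \<open>Q\<close>
  factorizes as \<open>\<Prod>\<^sub>i (1 + \<lambda>\<^sup>2 \<chi>\<^sup>2(P\<^sub>i\<parallel>Q\<^sub>i)) - 1\<close>, on both the input and the output side,
  this gives (a) and (b); the remaining inequalities of (a) are
  \<open>\<Prod>(1 + a\<^sub>i) - \<Prod>(1 + b\<^sub>i) \<ge> \<Sum>(a\<^sub>i - b\<^sub>i)\<close> for \<open>0 \<le> b\<^sub>i \<le> a\<^sub>i\<close> and the \<open>\<chi>\<^sup>2\<close> data-processing
  inequality. For (c), \<open>I\<close> shrinks to \<open>{1}\<close> as \<open>\<lambda> \<rightarrow> 0\<close>, so \<open>c\<^sub>f\<close> and \<open>e\<^sub>f\<close> both tend to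
  \<open>f''(1)/2\<close> and the gap, divided by \<open>\<lambda>\<^sup>2\<close>, is squeezed between the two bounds.
\<close>

lemma has_sum_diff:
  fixes f g :: "'a \<Rightarrow> 'b::topological_ab_group_add"
  assumes "(f has_sum a) A" and "(g has_sum b) A"
  shows "((\<lambda>x. f x - g x) has_sum (a - b)) A"
proof -
  have "((\<lambda>x. - g x) has_sum - b) A"
    using assms(2) by (simp add: has_sum_uminus)
  from has_sum_add[OF assms(1) this] show ?thesis by simp
qed

lemma has_sum_nonneg_member_le:
  fixes f :: "'a \<Rightarrow> 'b::{ordered_comm_monoid_add,linorder_topology}"
  assumes "(f has_sum s) A" and "\<And>x. x \<in> A \<Longrightarrow> 0 \<le> f x" and "x \<in> A"
  shows "f x \<le> s"
  using has_sum_mono_neutral[OF has_sum_finite[of "{x}" f] assms(1)] assms by auto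

subsection \<open>Sums over sequences of fixed length\<close>

lemma bij_betw_Cons_seqs: "bij_betw (\<lambda>(x, xs). x # xs) (UNIV \<times> seqs n) (seqs (Suc n))"
  unfolding seqs_def
  by (rule bij_betwI[of _ _ _ "\<lambda>xs. (hd xs, tl xs)"]) (auto simp: length_Suc_conv)

lemma has_sum_prod_seqs:
  fixes h :: "nat \<Rightarrow> 'a \<Rightarrow> real"
  assumes "\<And>i. i < n \<Longrightarrow> (h i has_sum s i) UNIV" and "\<And>i x. i < n \<Longrightarrow> 0 \<le> h i x"
  shows "((\<lambda>xs. \<Prod>i<n. h i (xs ! i)) has_sum (\<Prod>i<n. s i)) (seqs n)"
  using assms
proof (induction n arbitrary: h s)
  case 0
  have "seqs 0 = {[] :: 'a list}" by (auto simp: seqs_def)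
  then show ?case by (simp add: has_sum_finiteI)
next
  case (Suc n)
  define H where "H xs = (\<Prod>i<n. h (Suc i) (xs ! i))" for xs
  define F where "F = (\<lambda>(x, xs). h 0 x * H xs)"
  have tail: "(H has_sum (\<Prod>i<n. s (Suc i))) (seqs n)"
    unfolding H_def by (rule Suc.IH) (use Suc.prems in auto)
  have inner: "((\<lambda>xs. F (x, xs)) has_sum h 0 x * (\<Prod>i<n. s (Suc i))) (seqs n)" for x
    unfolding F_def using has_sum_cmult_right[OF tail] by simp
  have outer: "((\<lambda>x. h 0 x * (\<Prod>i<n. s (Suc i))) has_sum s 0 * (\<Prod>i<n. s (Suc i))) UNIV"
    using has_sum_cmult_left[OF Suc.prems(1)[of 0]] by simp
  have "F summable_on UNIV \<times> seqs n"
    by (rule summable_on_SigmaI[OF inner has_sum_imp_summable[OF outer]])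
       (use Suc.prems in \<open>auto simp: F_def H_def intro!: mult_nonneg_nonneg prod_nonneg\<close>)
  with inner outer have "(F has_sum s 0 * (\<Prod>i<n. s (Suc i))) (UNIV \<times> seqs n)"
    by (rule has_sum_SigmaI)
  then have "((\<lambda>xs. \<Prod>i<Suc n. h i (xs ! i)) has_sum s 0 * (\<Prod>i<n. s (Suc i))) (seqs (Suc n))"
    unfolding has_sum_reindex_bij_betw[OF bij_betw_Cons_seqs, symmetric]
    by (rule has_sum_cong[THEN iffD1, rotated])
       (auto simp del: prod.lessThan_Suc simp add: F_def H_def prod.lessThan_Suc_shift)
  then show ?case by (simp del: prod.lessThan_Suc add: prod.lessThan_Suc_shift)
qed

subsection \<open>Channels\<close>

definition channel_on :: "('a \<Rightarrow> 'b \<Rightarrow> real) \<Rightarrow> 'a set \<Rightarrow> 'b set \<Rightarrow> bool" where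
  "channel_on W A B \<longleftrightarrow> (\<forall>a\<in>A. (W a has_sum 1) B \<and> (\<forall>b\<in>B. 0 \<le> W a b))"

lemma channel_onD:
  assumes "channel_on W A B" and "a \<in> A"
  shows "(W a has_sum 1) B" and "b \<in> B \<Longrightarrow> 0 \<le> W a b"
  using assms by (auto simp: channel_on_def)

lemma channel_on_le_1:
  assumes "channel_on W A B" and "a \<in> A" and "b \<in> B"
  shows "W a b \<le> 1"
  by (rule has_sum_nonneg_member_le[OF channel_onD(1)[OF assms(1,2)]])
     (simp_all add: channel_onD(2)[OF assms(1,2)] assms(3))

lemma has_sum_chan_out_slice:
  assumes p: "p summable_on A" "\<And>a. a \<in> A \<Longrightarrow> 0 \<le> p a"
    and W: "channel_on W A B" and b: "b \<in> B"
  shows "((\<lambda>a. p a * W a b) has_sum chan_out p W A b) A"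
proof -
  have "(\<lambda>a. p a * W a b) summable_on A"
    by (rule summable_on_comparison_test[OF p(1)])
       (use p(2) channel_on_le_1[OF W _ b] channel_onD(2)[OF W _ b] in \<open>auto intro: mult_left_le\<close>)
  then show ?thesis unfolding chan_out_def by simp
qed

lemma has_sum_chan_out:
  assumes p: "(p has_sum s) A" "\<And>a. a \<in> A \<Longrightarrow> 0 \<le> p a" and W: "channel_on W A B"
  shows "(chan_out p W A has_sum s) B"
proof -
  define F where "F = (\<lambda>(a, b). p a * W a b)"
  have rows: "((\<lambda>b. F (a, b)) has_sum p a) B" if "a \<in> A" for a
    unfolding F_def using has_sum_cmult_right[OF channel_onD(1)[OF W that], of "p a"] by simp
  have "F summable_on A \<times> B"
    by (rule summable_on_SigmaI[OF rows has_sum_imp_summable[OF p(1)]])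
       (auto simp: F_def intro!: mult_nonneg_nonneg p(2) channel_onD(2)[OF W])
  with rows p(1) have "(F has_sum s) (A \<times> B)" by (rule has_sum_SigmaI)
  then have "((\<lambda>(b, a). F (a, b)) has_sum s) (B \<times> A)" by (rule has_sum_swap[THEN iffD1])
  then show ?thesis
  proof (rule has_sum_SigmaD)
    fix b assume "b \<in> B"
    from has_sum_chan_out_slice[OF has_sum_imp_summable[OF p(1)] p(2) W this]
    show "((\<lambda>a. (\<lambda>(b, a). F (a, b)) (b, a)) has_sum chan_out p W A b) A"
      by (simp add: F_def)
  qed
qed

lemma chan_out_nonneg:
  assumes "\<And>a. a \<in> A \<Longrightarrow> 0 \<le> p a" and "channel_on W A B" and "b \<in> B"
  shows "0 \<le> chan_out p W A b"
proof -
  have "0 \<le> p a * W a b" if "a \<in> A" for a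
    using assms(1)[OF that] channel_onD(2)[OF assms(2) that assms(3)] by simp
  then show ?thesis unfolding chan_out_def by (rule infsum_nonneg)
qed

lemma chan_out_scaled_mono:
  assumes p: "p summable_on A" "\<And>a. a \<in> A \<Longrightarrow> 0 \<le> p a"
    and p': "p' summable_on A" "\<And>a. a \<in> A \<Longrightarrow> 0 \<le> p' a"
    and W: "channel_on W A B" and b: "b \<in> B"
    and le: "\<And>a. a \<in> A \<Longrightarrow> c * p a \<le> d * p' a"
  shows "c * chan_out p W A b \<le> d * chan_out p' W A b"
proof -
  have "c * (p a * W a b) \<le> d * (p' a * W a b)" if "a \<in> A" for a
    using mult_right_mono[OF le[OF that] channel_onD(2)[OF W that b]] by (simp only: mult.assoc)
  moreover note has_sum_cmult_right[OF has_sum_chan_out_slice[OF p(1) p(2) W b], of c]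
  moreover note has_sum_cmult_right[OF has_sum_chan_out_slice[OF p'(1) p'(2) W b], of d]
  ultimately show ?thesis by (rule has_sum_mono[rotated 2])
qed

lemma chan_out_eq_0:
  assumes q: "q summable_on A" "\<And>a. a \<in> A \<Longrightarrow> 0 < q a"
    and r: "r summable_on A" "\<And>a. a \<in> A \<Longrightarrow> 0 \<le> r a"
    and W: "channel_on W A B" and b: "b \<in> B" and q0: "chan_out q W A b = 0"
  shows "chan_out r W A b = 0"
proof -
  have q_slice: "((\<lambda>a. q a * W a b) has_sum 0) A"
    using has_sum_chan_out_slice[OF q(1) less_imp_le[OF q(2)] W b] q0 by simp
  have "W a b = 0" if "a \<in> A" for a
  proof -
    have "0 \<le> q a * W a b" if "a \<in> A" for a
      using q(2)[OF that] channel_onD(2)[OF W that b] by simp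
    then have "q a * W a b = 0"
      by (rule nonneg_has_sum_le_0D[OF q_slice order_refl _ that])
    then show ?thesis using q(2)[OF that] by simp
  qed
  then have "((\<lambda>a. r a * W a b) has_sum 0) A" by (simp add: has_sum_0)
  with has_sum_chan_out_slice[OF r W b] show ?thesis using has_sum_unique by blast
qed

lemma chan_out_lincomb:
  assumes "p summable_on A" "\<And>a. a \<in> A \<Longrightarrow> 0 \<le> p a"
    and "q summable_on A" "\<And>a. a \<in> A \<Longrightarrow> 0 \<le> q a"
    and "channel_on W A B" and "b \<in> B"
  shows "chan_out (\<lambda>a. u * p a + v * q a) W A b = u * chan_out p W A b + v * chan_out q W A b"
proof -
  have "((\<lambda>a. u * (p a * W a b) + v * (q a * W a b))
      has_sum u * chan_out p W A b + v * chan_out q W A b) A"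
    by (intro has_sum_add has_sum_cmult_right has_sum_chan_out_slice[OF assms(1,2,5,6)]
        has_sum_chan_out_slice[OF assms(3,4,5,6)])
  then show ?thesis unfolding chan_out_def by (simp add: infsumI algebra_simps)
qed

lemma channel_on_chanN:
  assumes "\<And>i. i < n \<Longrightarrow> channel_on (W i) UNIV UNIV"
  shows "channel_on (chanN n W) (seqs n) (seqs n)"
proof -
  have "(chanN n W xs has_sum (\<Prod>i<n. 1)) (seqs n)" for xs
    unfolding chanN_def by (rule has_sum_prod_seqs) (auto intro: channel_onD[OF assms])
  moreover have "0 \<le> chanN n W xs ys" for xs ys
    unfolding chanN_def by (rule prod_nonneg) (auto intro: channel_onD[OF assms])
  ultimately show ?thesis by (simp add: channel_on_def)
qed

lemma chan_out_chanN_prod: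
  assumes p: "\<And>i. i < n \<Longrightarrow> p i summable_on UNIV" "\<And>i x. i < n \<Longrightarrow> 0 \<le> p i x"
    and W: "\<And>i. i < n \<Longrightarrow> channel_on (W i) UNIV UNIV"
  shows "chan_out (\<lambda>xs. \<Prod>i<n. p i (xs ! i)) (chanN n W) (seqs n) ys
       = (\<Prod>i<n. chan_out (p i) (W i) UNIV (ys ! i))"
proof -
  have "((\<lambda>x. p i x * W i x (ys ! i)) has_sum chan_out (p i) (W i) UNIV (ys ! i)) UNIV"
    if "i < n" for i
    by (rule has_sum_chan_out_slice[OF p(1)[OF that] p(2)[OF that] W[OF that]]) simp
  then have hs: "((\<lambda>xs. \<Prod>i<n. p i (xs ! i) * W i (xs ! i) (ys ! i))
      has_sum (\<Prod>i<n. chan_out (p i) (W i) UNIV (ys ! i))) (seqs n)"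
    by (rule has_sum_prod_seqs) (auto intro!: mult_nonneg_nonneg p(2) channel_onD(2)[OF W])
  have eq: "(\<Prod>i<n. p i (xs ! i)) * chanN n W xs ys
      = (\<Prod>i<n. p i (xs ! i) * W i (xs ! i) (ys ! i))" for xs
    by (simp add: chanN_def prod.distrib)
  have "chan_out (\<lambda>xs. \<Prod>i<n. p i (xs ! i)) (chanN n W) (seqs n) ys
      = (\<Sum>\<^sub>\<infinity>xs\<in>seqs n. \<Prod>i<n. p i (xs ! i) * W i (xs ! i) (ys ! i))"
    unfolding chan_out_def eq ..
  also have "\<dots> = (\<Prod>i<n. chan_out (p i) (W i) UNIV (ys ! i))" by (rule infsumI[OF hs])
  finally show ?thesis .
qed

subsection \<open>Supporting lines and the data-processing inequality\<close>

lemma is_interval_Ival: "is_interval (Ival lo hi)"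
  unfolding is_interval_1
proof (intro ballI allI impI)
  fix a b x assume "a \<in> Ival lo hi" "b \<in> Ival lo hi" "a \<le> x \<and> x \<le> b"
  then have "0 < x" "lo \<le> ereal a" "ereal a \<le> ereal x" "ereal x \<le> ereal b" "ereal b \<le> hi"
    by (auto simp: Ival_def)
  then show "x \<in> Ival lo hi" unfolding Ival_def by (blast intro: order_trans)
qed

lemma above_tangent_of_deriv2_nonneg:
  fixes \<phi> d\<phi> d2\<phi> :: "real \<Rightarrow> real"
  assumes C: "is_interval C"
    and d1: "\<And>t. t \<in> C \<Longrightarrow> (\<phi> has_real_derivative d\<phi> t) (at t)"
    and d2: "\<And>t. t \<in> C \<Longrightarrow> (d\<phi> has_real_derivative d2\<phi> t) (at t)"
    and nn: "\<And>t. t \<in> C \<Longrightarrow> 0 \<le> d2\<phi> t"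
    and m: "m \<in> C" and t: "t \<in> C"
  shows "\<phi> m + d\<phi> m * (t - m) \<le> \<phi> t"
proof -
  have between: "z \<in> C" if "x \<in> C" "y \<in> C" "x \<le> z" "z \<le> y" for x y z
    by (rule mem_is_interval_1_I[OF C that])
  have mono: "d\<phi> x \<le> d\<phi> y" if "x \<in> C" "y \<in> C" "x \<le> y" for x y
  proof (rule DERIV_nonneg_imp_nondecreasing[OF that(3)])
    fix z assume "x \<le> z" "z \<le> y"
    then have "z \<in> C" using between[OF that(1,2)] by blast
    then show "\<exists>w. (d\<phi> has_real_derivative w) (at z) \<and> 0 \<le> w" using d2 nn by blast
  qed
  consider "t < m" | "t = m" | "m < t" by linarith
  then show ?thesis
  proof cases
    case 1
    then obtain z where z: "t < z" "z < m" "\<phi> m - \<phi> t = (m - t) * d\<phi> z"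
      using MVT2[OF 1 d1] between[OF t m] by blast
    have "d\<phi> z \<le> d\<phi> m" using mono between[OF t m] z m by simp
    then have "(m - t) * d\<phi> z \<le> (m - t) * d\<phi> m" using 1 by (simp add: mult_left_mono)
    then show ?thesis using z by (simp add: algebra_simps)
  next
    case 3
    then obtain z where z: "m < z" "z < t" "\<phi> t - \<phi> m = (t - m) * d\<phi> z"
      using MVT2[OF 3 d1] between[OF m t] by blast
    have "d\<phi> m \<le> d\<phi> z" using mono between[OF m t] z m by simp
    then have "(t - m) * d\<phi> m \<le> (t - m) * d\<phi> z" using 3 by (simp add: mult_left_mono)
    then show ?thesis using z by (simp add: algebra_simps)
  qed simp
qed

lemma chan_out_ratio_mem_Ival:
  assumes q: "q summable_on A" "\<And>a. a \<in> A \<Longrightarrow> 0 < q a"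
    and r: "r summable_on A"
    and W: "channel_on W A B" and b: "b \<in> B"
    and I: "\<And>a. a \<in> A \<Longrightarrow> r a / q a \<in> Ival lo hi"
    and pos: "0 < chan_out q W A b"
  shows "chan_out r W A b / chan_out q W A b \<in> Ival lo hi"
proof -
  define qy ry where "qy = chan_out q W A b" and "ry = chan_out r W A b"
  have q_nn: "0 \<le> q a" if "a \<in> A" for a using q(2)[OF that] by simp
  have r_pos: "0 < r a" if "a \<in> A" for a
    using I[OF that] q(2)[OF that] by (simp add: Ival_def zero_less_divide_iff)
  have r_nn: "0 \<le> r a" if "a \<in> A" for a using r_pos[OF that] by simp
  have "ry \<noteq> 0"
    using chan_out_eq_0[OF r r_pos q(1) q_nn W b] pos by (auto simp: qy_def ry_def)
  moreover have "0 \<le> ry" unfolding ry_def by (rule chan_out_nonneg[OF r_nn W b])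
  ultimately have ratio_pos: "0 < ry / qy" using pos by (simp add: qy_def)
  have "A \<noteq> {}" using pos by (auto simp: chan_out_def)
  then obtain a0 where a0: "a0 \<in> A" by blast
  have "lo \<le> ereal (ry / qy)"
  proof (cases lo)
    case (real c)
    have le: "c * q a \<le> 1 * r a" if "a \<in> A" for a
      using I[OF that] q(2)[OF that] by (simp add: Ival_def real le_divide_eq)
    have "c * qy \<le> 1 * ry"
      unfolding qy_def ry_def by (rule chan_out_scaled_mono[OF q(1) q_nn r r_nn W b le])
    then show ?thesis using pos by (simp add: real qy_def ry_def le_divide_eq)
  qed (use I[OF a0] in \<open>auto simp: Ival_def\<close>)
  moreover have "ereal (ry / qy) \<le> hi"
  proof (cases hi)
    case (real c)
    have le: "1 * r a \<le> c * q a" if "a \<in> A" for a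
      using I[OF that] q(2)[OF that] by (simp add: Ival_def real divide_le_eq)
    have "1 * ry \<le> c * qy"
      unfolding qy_def ry_def by (rule chan_out_scaled_mono[OF r r_nn q(1) q_nn W b le])
    then show ?thesis using pos by (simp add: real qy_def ry_def divide_le_eq)
  qed (use I[OF a0] in \<open>auto simp: Ival_def\<close>)
  ultimately show ?thesis using ratio_pos by (simp add: Ival_def qy_def ry_def)
qed

context
  fixes q r :: "'a \<Rightarrow> real" and W :: "'a \<Rightarrow> 'b \<Rightarrow> real" and A :: "'a set" and B :: "'b set"
    and lo hi :: ereal and \<phi> d\<phi> :: "real \<Rightarrow> real"
  assumes q: "q summable_on A" "\<And>a. a \<in> A \<Longrightarrow> 0 < q a"
    and r: "r summable_on A"
    and W: "channel_on W A B"
    and I: "\<And>a. a \<in> A \<Longrightarrow> r a / q a \<in> Ival lo hi"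
    and nn: "\<And>t. t \<in> Ival lo hi \<Longrightarrow> 0 \<le> \<phi> t"
    and tangent: "\<And>m t. m \<in> Ival lo hi \<Longrightarrow> t \<in> Ival lo hi \<Longrightarrow> \<phi> m + d\<phi> m * (t - m) \<le> \<phi> t"
    and S: "(\<lambda>a. q a * \<phi> (r a / q a)) summable_on A"
begin

lemma chan_out_jensen:
  assumes b: "b \<in> B"
  shows "chan_out q W A b * \<phi> (chan_out r W A b / chan_out q W A b)
      \<le> chan_out (\<lambda>a. q a * \<phi> (r a / q a)) W A b"
proof -
  define qy ry where "qy = chan_out q W A b" and "ry = chan_out r W A b"
  have q_nn: "0 \<le> q a" if "a \<in> A" for a using q(2)[OF that] by simp
  have r_nn: "0 \<le> r a" if "a \<in> A" for a
    using I[OF that] q(2)[OF that] by (simp add: Ival_def zero_less_divide_iff)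
  have terms_nn: "0 \<le> q a * \<phi> (r a / q a)" if "a \<in> A" for a
    using q_nn[OF that] nn[OF I[OF that]] by simp
  have G: "((\<lambda>a. q a * \<phi> (r a / q a) * W a b)
      has_sum chan_out (\<lambda>a. q a * \<phi> (r a / q a)) W A b) A"
    by (rule has_sum_chan_out_slice[OF S terms_nn W b])
  have "0 \<le> qy" unfolding qy_def by (rule chan_out_nonneg[OF q_nn W b])
  show ?thesis
  proof (cases "qy = 0")
    case True
    then show ?thesis using chan_out_nonneg[OF terms_nn W b] by (simp add: qy_def)
  next
    case False
    with \<open>0 \<le> qy\<close> have pos: "0 < qy" by simp
    define m where "m = ry / qy"
    have m: "m \<in> Ival lo hi"
      unfolding m_def qy_def ry_def
      by (rule chan_out_ratio_mem_Ival[OF q r W b I pos[unfolded qy_def]])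
    have L: "((\<lambda>a. (\<phi> m - d\<phi> m * m) * (q a * W a b) + d\<phi> m * (r a * W a b))
        has_sum (\<phi> m - d\<phi> m * m) * qy + d\<phi> m * ry) A"
      unfolding qy_def ry_def
      by (intro has_sum_add has_sum_cmult_right has_sum_chan_out_slice[OF q(1) q_nn W b]
          has_sum_chan_out_slice[OF r r_nn W b])
    have "(\<phi> m - d\<phi> m * m) * qy + d\<phi> m * ry \<le> chan_out (\<lambda>a. q a * \<phi> (r a / q a)) W A b"
    proof (rule has_sum_mono[OF L G])
      fix a assume a: "a \<in> A"
      have "(\<phi> m - d\<phi> m * m) * (q a * W a b) + d\<phi> m * (r a * W a b)
          = (\<phi> m + d\<phi> m * (r a / q a - m)) * (q a * W a b)"
        using q(2)[OF a] by (simp add: field_simps)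
      also have "\<dots> \<le> \<phi> (r a / q a) * (q a * W a b)"
        by (rule mult_right_mono[OF tangent[OF m I[OF a]]])
           (simp add: q_nn[OF a] channel_onD(2)[OF W a b])
      finally show "(\<phi> m - d\<phi> m * m) * (q a * W a b) + d\<phi> m * (r a * W a b)
          \<le> q a * \<phi> (r a / q a) * W a b"
        by (simp add: mult_ac)
    qed
    moreover have "(\<phi> m - d\<phi> m * m) * qy + d\<phi> m * ry = qy * \<phi> m"
      using pos by (simp add: m_def field_simps)
    ultimately show ?thesis by (simp add: m_def qy_def ry_def)
  qed
qed

lemma fdiv_chan_out_le:
  shows "(\<lambda>b. chan_out q W A b * \<phi> (chan_out r W A b / chan_out q W A b)) summable_on B"
    and "fdiv \<phi> (chan_out r W A) (chan_out q W A) B \<le> fdiv \<phi> r q A"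
proof -
  have terms_nn: "0 \<le> q a * \<phi> (r a / q a)" if "a \<in> A" for a
    using q(2)[OF that] nn[OF I[OF that]] by simp
  have G: "(chan_out (\<lambda>a. q a * \<phi> (r a / q a)) W A has_sum fdiv \<phi> r q A) B"
    unfolding fdiv_def by (rule has_sum_chan_out[OF has_sum_infsum[OF S] terms_nn W])
  have out_nn: "0 \<le> chan_out q W A b * \<phi> (chan_out r W A b / chan_out q W A b)" if "b \<in> B" for b
  proof (cases "chan_out q W A b = 0")
    case False
    then have "0 < chan_out q W A b"
      using chan_out_nonneg[of A q W B b] q(2) W that by (simp add: less_imp_le)
    then show ?thesis using nn[OF chan_out_ratio_mem_Ival[OF q r W that I]] by simp
  qed simp
  show summable: "(\<lambda>b. chan_out q W A b * \<phi> (chan_out r W A b / chan_out q W A b)) summable_on B"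
    by (rule summable_on_comparison_test[OF has_sum_imp_summable[OF G]])
       (simp_all add: chan_out_jensen out_nn)
  show "fdiv \<phi> (chan_out r W A) (chan_out q W A) B \<le> fdiv \<phi> r q A"
    unfolding fdiv_def infsumI[OF G, unfolded fdiv_def, symmetric]
    by (rule infsum_mono[OF summable has_sum_imp_summable[OF G]]) (rule chan_out_jensen)
qed

end

lemma has_sum_fdiv_terms_sub_linear:
  fixes q r :: "'a \<Rightarrow> real"
  assumes q: "(q has_sum 1) A" and r: "(r has_sum 1) A"
    and zero: "\<And>a. a \<in> A \<Longrightarrow> q a = 0 \<Longrightarrow> r a = 0"
    and \<phi>: "((\<lambda>a. q a * \<phi> (r a / q a)) has_sum s) A"
  shows "((\<lambda>a. q a * (\<phi> (r a / q a) - d * (r a / q a - 1))) has_sum s) A"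
proof -
  have "((\<lambda>a. q a * \<phi> (r a / q a) - d * (r a - q a)) has_sum s - d * (1 - 1)) A"
    by (intro has_sum_diff has_sum_cmult_right \<phi> r q)
  also have "s - d * (1 - 1) = s" by simp
  finally have "((\<lambda>a. q a * \<phi> (r a / q a) - d * (r a - q a)) has_sum s) A" .
  moreover have "q a * \<phi> (r a / q a) - d * (r a - q a) = q a * (\<phi> (r a / q a) - d * (r a / q a - 1))"
    if "a \<in> A" for a
    using zero[OF that] by (cases "q a = 0") (simp_all add: field_simps)
  ultimately show ?thesis by (rule has_sum_cong[THEN iffD1, rotated])
qed

lemma fdiv_chan_out_le_of_deriv2:
  fixes \<psi> d\<psi> d2\<psi> :: "real \<Rightarrow> real"
  assumes q: "(q has_sum 1) A" "\<And>a. a \<in> A \<Longrightarrow> 0 < q a"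
    and r: "(r has_sum 1) A"
    and W: "channel_on W A B"
    and I: "\<And>a. a \<in> A \<Longrightarrow> r a / q a \<in> Ival lo hi" and one: "1 \<in> Ival lo hi"
    and d1: "\<And>t. t \<in> Ival lo hi \<Longrightarrow> (\<psi> has_real_derivative d\<psi> t) (at t)"
    and d2: "\<And>t. t \<in> Ival lo hi \<Longrightarrow> (d\<psi> has_real_derivative d2\<psi> t) (at t)"
    and nn: "\<And>t. t \<in> Ival lo hi \<Longrightarrow> 0 \<le> d2\<psi> t"
    and \<psi>1: "\<psi> 1 = 0"
    and S: "(\<lambda>a. q a * \<psi> (r a / q a)) summable_on A"
  shows "(\<lambda>b. chan_out q W A b * \<psi> (chan_out r W A b / chan_out q W A b)) summable_on B"
    and "fdiv \<psi> (chan_out r W A) (chan_out q W A) B \<le> fdiv \<psi> r q A"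
proof -
  define \<phi> where "\<phi> t = \<psi> t - d\<psi> 1 * (t - 1)" for t
  define qy ry where "qy = chan_out q W A" and "ry = chan_out r W A"
  have d\<phi>: "(\<phi> has_real_derivative d\<psi> t - d\<psi> 1) (at t)" if "t \<in> Ival lo hi" for t
    unfolding \<phi>_def[abs_def] by (auto intro!: derivative_eq_intros d1 that)
  have d2\<phi>: "((\<lambda>t. d\<psi> t - d\<psi> 1) has_real_derivative d2\<psi> t) (at t)" if "t \<in> Ival lo hi" for t
    by (auto intro!: derivative_eq_intros d2 that)
  have tangent: "\<phi> m + (d\<psi> m - d\<psi> 1) * (t - m) \<le> \<phi> t"
    if "m \<in> Ival lo hi" "t \<in> Ival lo hi" for m t
    by (rule above_tangent_of_deriv2_nonneg[OF is_interval_Ival d\<phi> d2\<phi> nn that])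
  have \<phi>_nn: "0 \<le> \<phi> t" if "t \<in> Ival lo hi" for t
    using tangent[OF one that] \<psi>1 by (simp add: \<phi>_def)
  have q_nn: "0 \<le> q a" if "a \<in> A" for a using q(2)[OF that] by simp
  have r_nn: "0 \<le> r a" if "a \<in> A" for a
    using I[OF that] q(2)[OF that] by (simp add: Ival_def zero_less_divide_iff)
  have in_sum: "((\<lambda>a. q a * \<phi> (r a / q a)) has_sum fdiv \<psi> r q A) A"
    unfolding \<phi>_def fdiv_def
    by (rule has_sum_fdiv_terms_sub_linear[OF q(1) r _ has_sum_infsum[OF S]])
       (use q(2) in force)
  have dpi: "(\<lambda>b. qy b * \<phi> (ry b / qy b)) summable_on B" "fdiv \<phi> ry qy B \<le> fdiv \<phi> r q A"
    using fdiv_chan_out_le[OF has_sum_imp_summable[OF q(1)] q(2) has_sum_imp_summable[OF r] W I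
        \<phi>_nn tangent has_sum_imp_summable[OF in_sum]]
    by (simp_all add: qy_def ry_def)
  have qy_sum: "(qy has_sum 1) B" unfolding qy_def by (rule has_sum_chan_out[OF q(1) q_nn W])
  have ry_sum: "(ry has_sum 1) B" unfolding ry_def by (rule has_sum_chan_out[OF r r_nn W])
  have "ry b = 0" if "b \<in> B" "qy b = 0" for b
    using chan_out_eq_0[OF has_sum_imp_summable[OF q(1)] q(2) has_sum_imp_summable[OF r] r_nn W that(1)]
      that(2) by (simp add: qy_def ry_def)
  from has_sum_fdiv_terms_sub_linear[OF qy_sum ry_sum this has_sum_infsum[OF dpi(1)], of "- d\<psi> 1"]
  have out_sum: "((\<lambda>b. qy b * \<psi> (ry b / qy b)) has_sum fdiv \<phi> ry qy B) B"
    by (simp add: \<phi>_def fdiv_def)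
  show "(\<lambda>b. chan_out q W A b * \<psi> (chan_out r W A b / chan_out q W A b)) summable_on B"
    using has_sum_imp_summable[OF out_sum] by (simp add: qy_def ry_def)
  have "fdiv \<psi> ry qy B = fdiv \<phi> ry qy B"
    using infsumI[OF out_sum] by (simp add: fdiv_def)
  also have "\<dots> \<le> fdiv \<phi> r q A" by (rule dpi(2))
  also have "\<dots> = fdiv \<psi> r q A" using infsumI[OF in_sum] by (simp add: fdiv_def)
  finally show "fdiv \<psi> (chan_out r W A) (chan_out q W A) B \<le> fdiv \<psi> r q A"
    by (simp add: qy_def ry_def)
qed

text \<open>With \<open>\<sigma> = 1\<close> this is a lower bound on the gap of \<open>f\<close>-divergences, with \<open>\<sigma> = -1\<close> an upper bound.\<close>

lemma fdiv_gap_compare_chi2_gap: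
  fixes f :: "real \<Rightarrow> real" and \<sigma> \<kappa> :: real
  assumes q: "(q has_sum 1) A" "\<And>a. a \<in> A \<Longrightarrow> 0 < q a"
    and r: "(r has_sum 1) A"
    and W: "channel_on W A B"
    and I: "\<And>a. a \<in> A \<Longrightarrow> r a / q a \<in> Ival lo hi" and one: "1 \<in> Ival lo hi"
    and X: "((\<lambda>a. q a * (r a / q a - 1)\<^sup>2) has_sum X) A"
    and Y: "((\<lambda>b. chan_out q W A b * (chan_out r W A b / chan_out q W A b - 1)\<^sup>2) has_sum Y) B"
    and F: "(\<lambda>a. q a * f (r a / q a)) summable_on A"
    and f1: "f 1 = 0"
    and df: "\<And>t. 0 < t \<Longrightarrow> (f has_real_derivative deriv f t) (at t)"
    and d2f: "\<And>t. 0 < t \<Longrightarrow> (deriv f has_real_derivative deriv2 f t) (at t)"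
    and \<sigma>: "\<sigma> \<noteq> 0"
    and \<kappa>: "\<And>t. t \<in> Ival lo hi \<Longrightarrow> 0 \<le> \<sigma> * (deriv2 f t - 2 * \<kappa>)"
  shows "\<sigma> * (\<kappa> * (X - Y)) \<le> \<sigma> * (fdiv f r q A - fdiv f (chan_out r W A) (chan_out q W A) B)"
proof -
  define \<psi> where "\<psi> t = \<sigma> * (f t - \<kappa> * (t - 1)\<^sup>2)" for t
  define qy ry where "qy = chan_out q W A" and "ry = chan_out r W A"
  have pos: "0 < t" if "t \<in> Ival lo hi" for t using that by (simp add: Ival_def)
  have d\<psi>: "(\<psi> has_real_derivative \<sigma> * (deriv f t - \<kappa> * (2 * (t - 1)))) (at t)"
    if "t \<in> Ival lo hi" for t
    unfolding \<psi>_def[abs_def] by (auto intro!: derivative_eq_intros df pos that)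
  have d2\<psi>: "((\<lambda>t. \<sigma> * (deriv f t - \<kappa> * (2 * (t - 1)))) has_real_derivative
      \<sigma> * (deriv2 f t - 2 * \<kappa>)) (at t)" if "t \<in> Ival lo hi" for t
    by (auto intro!: derivative_eq_intros d2f pos that)
  have in_sum: "((\<lambda>a. q a * \<psi> (r a / q a)) has_sum \<sigma> * (fdiv f r q A - \<kappa> * X)) A"
    unfolding fdiv_def \<psi>_def
    by (rule has_sum_cong[THEN iffD1, OF _ has_sum_cmult_right[OF has_sum_diff[OF
          has_sum_infsum[OF F] has_sum_cmult_right[OF X]]]]) (simp add: algebra_simps)
  have \<psi>1: "\<psi> 1 = 0" by (simp add: \<psi>_def f1)
  note dpi = fdiv_chan_out_le_of_deriv2[OF q r W I one d\<psi> d2\<psi> \<kappa> \<psi>1 has_sum_imp_summable[OF in_sum]]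
  have out_eq: "qy b * f (ry b / qy b) = qy b * \<psi> (ry b / qy b) / \<sigma> + \<kappa> * (qy b * (ry b / qy b - 1)\<^sup>2)"
    for b using \<sigma> by (simp add: \<psi>_def field_simps)
  have "((\<lambda>b. qy b * \<psi> (ry b / qy b) / \<sigma> + \<kappa> * (qy b * (ry b / qy b - 1)\<^sup>2))
      has_sum fdiv \<psi> ry qy B / \<sigma> + \<kappa> * Y) B"
    unfolding fdiv_def qy_def ry_def
    by (intro has_sum_add has_sum_cmult_right has_sum_divide_const has_sum_infsum Y dpi(1))
  then have out_sum: "((\<lambda>b. qy b * f (ry b / qy b)) has_sum fdiv \<psi> ry qy B / \<sigma> + \<kappa> * Y) B"
    by (simp only: out_eq)
  have "\<sigma> * (fdiv f ry qy B - \<kappa> * Y) = fdiv \<psi> ry qy B"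
    using infsumI[OF out_sum] \<sigma> by (simp add: fdiv_def field_simps)
  also have "\<dots> \<le> fdiv \<psi> r q A" using dpi(2) by (simp add: qy_def ry_def)
  also have "\<dots> = \<sigma> * (fdiv f r q A - \<kappa> * X)" using infsumI[OF in_sum] by (simp add: fdiv_def)
  finally show ?thesis by (simp add: qy_def ry_def algebra_simps)
qed

subsection \<open>\<open>\<chi>\<^sup>2\<close>-divergence\<close>

lemma mult_ratio_minus_one_sq: "(q::real) * (r / q - 1)\<^sup>2 = (r - q)\<^sup>2 / q"
  by (cases "q = 0") (simp_all add: field_simps power2_eq_square)

lemma chi2_eq_fdiv: "chi2 p q A = fdiv (\<lambda>t. (t - 1)\<^sup>2) p q A"
  unfolding chi2_def fdiv_def mult_ratio_minus_one_sq ..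

lemma chi2_nonneg: "(\<And>a. a \<in> A \<Longrightarrow> 0 \<le> q a) \<Longrightarrow> 0 \<le> chi2 p q A"
  unfolding chi2_def by (rule infsum_nonneg) simp

lemma chi2_data_processing:
  assumes q: "(q has_sum 1) A" "\<And>a. a \<in> A \<Longrightarrow> 0 < q a"
    and p: "(p has_sum 1) A" "\<And>a. a \<in> A \<Longrightarrow> 0 < p a"
    and W: "channel_on W A B"
    and S: "(\<lambda>a. (p a - q a)\<^sup>2 / q a) summable_on A"
  shows "(\<lambda>b. (chan_out p W A b - chan_out q W A b)\<^sup>2 / chan_out q W A b) summable_on B"
    and "chi2 (chan_out p W A) (chan_out q W A) B \<le> chi2 p q A"
proof -
  have I: "p a / q a \<in> Ival (-\<infinity>) \<infinity>" if "a \<in> A" for a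
    using p(2)[OF that] q(2)[OF that] by (simp add: Ival_def)
  have d1: "((\<lambda>t. (t - 1)\<^sup>2) has_real_derivative 2 * (t - 1)) (at t)" for t :: real
    by (auto intro!: derivative_eq_intros)
  have d2: "((\<lambda>t. 2 * (t - 1)) has_real_derivative 2) (at t)" for t :: real
    by (auto intro!: derivative_eq_intros)
  have "(\<lambda>a. q a * (p a / q a - 1)\<^sup>2) summable_on A"
    using S by (simp add: mult_ratio_minus_one_sq)
  note dpi = fdiv_chan_out_le_of_deriv2[OF q p(1) W I _ d1 d2 _ _ this]
  show "(\<lambda>b. (chan_out p W A b - chan_out q W A b)\<^sup>2 / chan_out q W A b) summable_on B"
    using dpi(1) by (simp add: Ival_def mult_ratio_minus_one_sq)
  show "chi2 (chan_out p W A) (chan_out q W A) B \<le> chi2 p q A"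
    using dpi(2) by (simp add: Ival_def chi2_eq_fdiv)
qed

lemma has_sum_mixture_sq_ratio:
  fixes p q :: "'a \<Rightarrow> real"
  assumes p: "(p has_sum 1) A" and q: "(q has_sum 1) A"
    and zero: "\<And>a. a \<in> A \<Longrightarrow> q a = 0 \<Longrightarrow> p a = 0"
    and S: "(\<lambda>a. (p a - q a)\<^sup>2 / q a) summable_on A"
  shows "((\<lambda>a. (l * p a + (1 - l) * q a)\<^sup>2 / q a) has_sum 1 + l\<^sup>2 * chi2 p q A) A"
proof -
  have "((\<lambda>a. q a + 2 * l * (p a - q a) + l\<^sup>2 * ((p a - q a)\<^sup>2 / q a))
      has_sum 1 + 2 * l * (1 - 1) + l\<^sup>2 * chi2 p q A) A"
    unfolding chi2_def by (intro has_sum_add has_sum_cmult_right has_sum_diff has_sum_infsum S p q)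
  also have "1 + 2 * l * (1 - 1) + l\<^sup>2 * chi2 p q A = 1 + l\<^sup>2 * chi2 p q A" by simp
  finally have "((\<lambda>a. q a + 2 * l * (p a - q a) + l\<^sup>2 * ((p a - q a)\<^sup>2 / q a))
      has_sum 1 + l\<^sup>2 * chi2 p q A) A" .
  moreover have "q a + 2 * l * (p a - q a) + l\<^sup>2 * ((p a - q a)\<^sup>2 / q a)
      = (l * p a + (1 - l) * q a)\<^sup>2 / q a" if "a \<in> A" for a
    using zero[OF that] by (cases "q a = 0") (simp_all add: field_simps power2_eq_square)
  ultimately show ?thesis by (rule has_sum_cong[THEN iffD1, rotated])
qed

lemma has_sum_chi2_terms_of_sq_ratio:
  fixes r q :: "'a \<Rightarrow> real"
  assumes sq: "((\<lambda>a. (r a)\<^sup>2 / q a) has_sum s) A"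
    and r: "(r has_sum 1) A" and q: "(q has_sum 1) A"
    and zero: "\<And>a. a \<in> A \<Longrightarrow> q a = 0 \<Longrightarrow> r a = 0"
  shows "((\<lambda>a. q a * (r a / q a - 1)\<^sup>2) has_sum s - 1) A"
proof -
  have "((\<lambda>a. (r a)\<^sup>2 / q a - 2 * r a + q a) has_sum s - 2 * 1 + 1) A"
    by (intro has_sum_add has_sum_diff has_sum_cmult_right sq r q)
  also have "s - 2 * 1 + 1 = s - 1" by simp
  finally have "((\<lambda>a. (r a)\<^sup>2 / q a - 2 * r a + q a) has_sum s - 1) A" .
  moreover have "(r a)\<^sup>2 / q a - 2 * r a + q a = q a * (r a / q a - 1)\<^sup>2" if "a \<in> A" for a
    using zero[OF that] by (cases "q a = 0") (simp_all add: field_simps power2_eq_square)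
  ultimately show ?thesis by (rule has_sum_cong[THEN iffD1, rotated])
qed

lemma chi2_summable_of_bounded_ratio:
  fixes p q :: "'a \<Rightarrow> real"
  assumes q: "q summable_on A" "\<And>a. a \<in> A \<Longrightarrow> 0 < q a"
    and p: "\<And>a. a \<in> A \<Longrightarrow> 0 \<le> p a" and s: "\<And>a. a \<in> A \<Longrightarrow> p a / q a \<le> s"
  shows "(\<lambda>a. (p a - q a)\<^sup>2 / q a) summable_on A"
proof (rule summable_on_comparison_test[OF summable_on_cmult_right[OF q(1), of "(s + 1)\<^sup>2"]])
  fix a assume a: "a \<in> A"
  have "0 \<le> p a / q a" using p[OF a] q(2)[OF a] by simp
  then have "\<bar>p a / q a - 1\<bar> \<le> \<bar>s + 1\<bar>" using s[OF a] by linarith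
  then have "(p a / q a - 1)\<^sup>2 \<le> (s + 1)\<^sup>2" by (simp add: abs_le_square_iff)
  from mult_left_mono[OF this less_imp_le[OF q(2)[OF a]]]
  show "(p a - q a)\<^sup>2 / q a \<le> (s + 1)\<^sup>2 * q a"
    by (simp add: mult_ratio_minus_one_sq[symmetric] mult.commute)
  show "0 \<le> (p a - q a)\<^sup>2 / q a" using q(2)[OF a] by simp
qed

lemma sum_diff_le_prod_one_plus_diff:
  fixes a b :: "nat \<Rightarrow> real"
  assumes "\<And>i. i < n \<Longrightarrow> 0 \<le> b i \<and> b i \<le> a i"
  shows "(\<Sum>i<n. a i - b i) \<le> (\<Prod>i<n. 1 + a i) - (\<Prod>i<n. 1 + b i)"
  using assms
proof (induction n)
  case (Suc n)
  define A B where "A = (\<Prod>i<n. 1 + a i)" and "B = (\<Prod>i<n. 1 + b i)"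
  have IH: "(\<Sum>i<n. a i - b i) \<le> A - B" unfolding A_def B_def by (rule Suc.IH) (use Suc.prems in auto)
  have B1: "1 \<le> B" unfolding B_def using Suc.prems by (intro prod_ge_1) auto
  have BA: "B \<le> A" unfolding A_def B_def by (rule prod_mono) (use Suc.prems in force)
  have ab: "0 \<le> b n" "b n \<le> a n" using Suc.prems[of n] by auto
  have "(a n - b n) * 1 \<le> (a n - b n) * B" using ab B1 by (intro mult_left_mono) auto
  moreover have "0 \<le> a n * (A - B)" using ab BA by simp
  ultimately have "a n - b n \<le> A * (1 + a n) - B * (1 + b n) - (A - B)"
    by (simp add: algebra_simps)
  with IH show ?case by (simp add: A_def B_def algebra_simps)
qed simp

lemma tendsto_prod_one_plus_sq_minus_one_div_sq:
  fixes a :: "nat \<Rightarrow> real"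
  shows "((\<lambda>l. ((\<Prod>i<n. 1 + l\<^sup>2 * a i) - 1) / l\<^sup>2) \<longlongrightarrow> (\<Sum>i<n. a i)) (at_right 0)"
proof (induction n)
  case (Suc n)
  have "((\<lambda>l. ((\<Prod>i<n. 1 + l\<^sup>2 * a i) - 1) / l\<^sup>2 + a n * (\<Prod>i<n. 1 + l\<^sup>2 * a i))
      \<longlongrightarrow> (\<Sum>i<n. a i) + a n * (\<Prod>i<n. 1 + 0\<^sup>2 * a i)) (at_right 0)"
    by (intro tendsto_intros Suc.IH)
  moreover have "eventually (\<lambda>l. ((\<Prod>i<n. 1 + l\<^sup>2 * a i) - 1) / l\<^sup>2 + a n * (\<Prod>i<n. 1 + l\<^sup>2 * a i)
      = ((\<Prod>i<Suc n. 1 + l\<^sup>2 * a i) - 1) / l\<^sup>2) (at_right (0::real))"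
    using eventually_at_right_less[of "0::real"] by eventually_elim (simp add: field_simps)
  ultimately show ?case by (simp add: tendsto_cong)
qed simp

subsection \<open>The interval \<open>I(\<xi>\<^sub>1, \<xi>\<^sub>2)\<close> and the constants \<open>c\<^sub>f\<close>, \<open>e\<^sub>f\<close>\<close>

lemma has_sum_1_ratio_le_1:
  fixes p q :: "'a \<Rightarrow> real"
  assumes "(p has_sum 1) UNIV" "(q has_sum 1) UNIV" "\<And>x. 0 < q x"
  shows "\<exists>x. p x / q x \<le> 1"
proof (rule ccontr)
  assume "\<not> ?thesis"
  then have "1 < p x / q x" for x by (simp add: not_le)
  then have "q x < p x" for x using less_divide_eq_1_pos[OF assms(3)] by blast
  then have "(1::real) < 1"
    using has_sum_strict_mono[OF assms(2,1), of undefined] by (simp add: less_imp_le)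
  then show False by simp
qed

lemma prod_mono_ereal:
  fixes f g :: "'i \<Rightarrow> ereal"
  assumes "\<And>i. i \<in> A \<Longrightarrow> 0 \<le> f i \<and> f i \<le> g i"
  shows "prod f A \<le> prod g A"
  using assms
proof (induction A rule: infinite_finite_induct)
  case (insert i A)
  have "0 \<le> prod f A" by (rule prod_ereal_pos) (use insert.prems in auto)
  moreover have "prod f A \<le> prod g A" by (rule insert.IH) (use insert.prems in auto)
  ultimately have "f i * prod f A \<le> g i * prod g A"
    using insert.prems[of i] by (intro ereal_mult_mono') auto
  then show ?case using insert by simp
qed auto

lemma deriv2_nonneg_of_convex_on:
  fixes f :: "real \<Rightarrow> real"
  assumes cvx: "convex_on {0<..} f"
    and diff: "\<forall>t>0. f differentiable (at t) \<and> deriv f differentiable (at t)"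
    and t: "0 < t"
  shows "0 \<le> deriv2 f t"
proof -
  have df: "(f has_real_derivative deriv f x) (at x)" if "0 < x" for x
    using diff that DERIV_deriv_iff_real_differentiable by blast
  have tangent: "deriv f x * (y - x) \<le> f y - f x" if "0 < x" "0 < y" for x y
    by (rule convex_on_imp_above_tangent[OF cvx])
       (use that df[OF that(1)] in \<open>auto intro: has_field_derivative_at_within simp: interior_open\<close>)
  have "mono_on {0<..} (deriv f)"
  proof (rule mono_onI)
    fix x y :: real assume xy: "x \<in> {0<..}" "y \<in> {0<..}" "x \<le> y"
    have "deriv f x * (y - x) \<le> deriv f y * (y - x)"
      using tangent[of x y] tangent[of y x] xy by (simp add: algebra_simps)
    then show "deriv f x \<le> deriv f y" using xy by (cases "x = y") simp_all
  qed
  moreover have "(deriv f has_real_derivative deriv2 f t) (at t)"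
    unfolding deriv2_def using diff t DERIV_deriv_iff_real_differentiable by blast
  ultimately show ?thesis by (rule mono_on_imp_deriv_nonneg) (use t in \<open>simp add: interior_open\<close>)
qed

lemma c_f_le_deriv2:
  assumes "\<And>t. 0 < t \<Longrightarrow> 0 \<le> deriv2 f t" and "t \<in> Ival a b"
  shows "c_f f a b \<le> deriv2 f t / 2"
proof -
  have "bdd_below (deriv2 f ` Ival a b)" using assms(1) by (intro bdd_belowI2[of _ 0]) (simp add: Ival_def)
  then show ?thesis unfolding c_f_def using cINF_lower[OF _ assms(2)] by simp
qed

lemma c_f_nonneg:
  assumes "\<And>t. 0 < t \<Longrightarrow> 0 \<le> deriv2 f t" and "t \<in> Ival a b"
  shows "0 \<le> c_f f a b"
proof -
  have "0 \<le> (INF t\<in>Ival a b. deriv2 f t)"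
    using assms by (intro cINF_greatest) (auto simp: Ival_def)
  then show ?thesis by (simp add: c_f_def)
qed

lemma e_f_finite:
  assumes "\<And>t. 0 < t \<Longrightarrow> 0 \<le> deriv2 f t" and "t \<in> Ival a b" and "e_f f a b < \<infinity>"
  obtains e where "e_f f a b = ereal e" and "\<And>t. t \<in> Ival a b \<Longrightarrow> deriv2 f t / 2 \<le> e"
proof -
  have upper: "ereal (deriv2 f t / 2) \<le> e_f f a b" if "t \<in> Ival a b" for t
  proof -
    have "ereal (1/2) * ereal (deriv2 f t) \<le> ereal (1/2) * (SUP t\<in>Ival a b. ereal (deriv2 f t))"
      by (rule ereal_mult_left_mono[OF SUP_upper[OF that]]) simp
    then show ?thesis by (simp add: e_f_def)
  qed
  have "0 \<le> ereal (deriv2 f t / 2)" using assms(1,2) by (simp add: Ival_def)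
  then have "0 \<le> e_f f a b" using upper[OF assms(2)] by (rule order_trans)
  with assms(3) obtain e where e: "e_f f a b = ereal e" by (cases "e_f f a b") auto
  with upper show ?thesis by (intro that) simp_all
qed

subsection \<open>Limits over shrinking sets\<close>

lemma continuous_at_real_epsD:
  fixes g :: "real \<Rightarrow> real"
  assumes "isCont g x0" and "0 < e"
  obtains d where "0 < d" and "\<And>t. \<bar>t - x0\<bar> < d \<Longrightarrow> \<bar>g t - g x0\<bar> < e"
  using assms unfolding continuous_at_eps_delta dist_real_def by blast

lemma tendsto_INF_shrinking:
  fixes g :: "real \<Rightarrow> real" and I :: "'a \<Rightarrow> real set"
  assumes g: "isCont g x0"
    and shrink: "\<And>d. 0 < d \<Longrightarrow> eventually (\<lambda>l. x0 \<in> I l \<and> (\<forall>t\<in>I l. \<bar>t - x0\<bar> < d)) F"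
  shows "((\<lambda>l. INF t\<in>I l. g t) \<longlongrightarrow> g x0) F"
proof (rule tendstoI)
  fix e :: real assume e: "0 < e"
  then obtain d where d: "0 < d" "\<And>t. \<bar>t - x0\<bar> < d \<Longrightarrow> \<bar>g t - g x0\<bar> < e / 2"
    using continuous_at_real_epsD[OF g, of "e / 2"] by auto
  show "eventually (\<lambda>l. dist (INF t\<in>I l. g t) (g x0) < e) F"
    using shrink[OF d(1)]
  proof eventually_elim
    case (elim l)
    have near: "g x0 - e / 2 \<le> g t" if "t \<in> I l" for t
    proof -
      have "\<bar>g t - g x0\<bar> < e / 2" using d(2) elim that by blast
      then show ?thesis by linarith
    qed
    then have "bdd_below (g ` I l)" by (intro bdd_belowI2)
    then have "(INF t\<in>I l. g t) \<le> g x0" using elim by (intro cINF_lower) auto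
    moreover have "g x0 - e / 2 \<le> (INF t\<in>I l. g t)" using elim near by (intro cINF_greatest) auto
    ultimately show ?case using e by (simp add: dist_real_def)
  qed
qed

lemma tendsto_SUP_ereal_shrinking:
  fixes g :: "real \<Rightarrow> real" and I :: "'a \<Rightarrow> real set"
  assumes g: "isCont g x0"
    and shrink: "\<And>d. 0 < d \<Longrightarrow> eventually (\<lambda>l. x0 \<in> I l \<and> (\<forall>t\<in>I l. \<bar>t - x0\<bar> < d)) F"
  shows "((\<lambda>l. SUP t\<in>I l. ereal (g t)) \<longlongrightarrow> ereal (g x0)) F"
proof (rule order_tendstoI)
  fix a assume a: "a < ereal (g x0)"
  show "eventually (\<lambda>l. a < (SUP t\<in>I l. ereal (g t))) F"
    using shrink[OF zero_less_one] by eventually_elim (use a in \<open>auto intro: less_le_trans SUP_upper\<close>)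
next
  fix a assume "ereal (g x0) < a"
  then obtain r where r: "g x0 < r" "ereal r < a" using ereal_dense2 by force
  then obtain d where d: "0 < d" "\<And>t. \<bar>t - x0\<bar> < d \<Longrightarrow> \<bar>g t - g x0\<bar> < r - g x0"
    using continuous_at_real_epsD[OF g, of "r - g x0"] by auto
  show "eventually (\<lambda>l. (SUP t\<in>I l. ereal (g t)) < a) F"
    using shrink[OF d(1)]
  proof eventually_elim
    case (elim l)
    have "ereal (g t) \<le> ereal r" if "t \<in> I l" for t
    proof -
      have "\<bar>g t - g x0\<bar> < r - g x0" using d(2) elim that by blast
      then show ?thesis by simp
    qed
    then have "(SUP t\<in>I l. ereal (g t)) \<le> ereal r" by (rule SUP_least)
    then show ?case using r(2) by simp
  qed
qed

subsection \<open>Product channels\<close>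

locale product_channel =
  fixes P Q :: "nat \<Rightarrow> 'x::countable \<Rightarrow> real" and W :: "nat \<Rightarrow> 'x \<Rightarrow> 'y::countable \<Rightarrow> real"
    and n :: nat
  assumes pmfP: "\<forall>i<n. is_pmf (P i) \<and> (\<forall>x. 0 < P i x)"
    and pmfQ: "\<forall>i<n. is_pmf (Q i) \<and> (\<forall>x. 0 < Q i x)"
    and chan: "\<forall>i<n. \<forall>x. is_pmf (W i x)"
begin

lemma P_pos: "i < n \<Longrightarrow> 0 < P i x" and Q_pos: "i < n \<Longrightarrow> 0 < Q i x"
  and P_sum: "i < n \<Longrightarrow> (P i has_sum 1) UNIV" and Q_sum: "i < n \<Longrightarrow> (Q i has_sum 1) UNIV"
  and W_channel: "i < n \<Longrightarrow> channel_on (W i) UNIV UNIV"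
  using pmfP pmfQ chan by (auto simp: is_pmf_def channel_on_def)

lemma P_nonneg: "i < n \<Longrightarrow> 0 \<le> P i x" and Q_nonneg: "i < n \<Longrightarrow> 0 \<le> Q i x"
  using P_pos Q_pos by (simp_all add: less_imp_le)

lemma mix_pos:
  assumes "0 \<le> l" "l \<le> 1" "i < n"
  shows "0 < l * P i x + (1 - l) * Q i x"
proof -
  have "0 \<le> l * P i x" "0 \<le> (1 - l) * Q i x"
    using assms P_pos[of i x] Q_pos[of i x] by simp_all
  moreover have "0 < l * P i x \<or> 0 < (1 - l) * Q i x"
    using assms P_pos[of i x] Q_pos[of i x] by (cases "l = 0") simp_all
  ultimately show ?thesis by linarith
qed

lemma has_sum_mix:
  assumes "i < n"
  shows "((\<lambda>x. l * P i x + (1 - l) * Q i x) has_sum 1) UNIV"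
proof -
  have "((\<lambda>x. l * P i x + (1 - l) * Q i x) has_sum l * 1 + (1 - l) * 1) UNIV"
    by (intro has_sum_add has_sum_cmult_right P_sum Q_sum assms)
  then show ?thesis by simp
qed

lemma prodX_Q_pos: "0 < prodX n Q xs"
  unfolding prodX_def by (rule prod_pos) (simp add: Q_pos)

lemma has_sum_prodX_Q: "(prodX n Q has_sum 1) (seqs n)"
  using has_sum_prod_seqs[of n Q "\<lambda>_. 1"] Q_sum Q_pos by (simp add: prodX_def less_imp_le)

lemma Rlam_nonneg: "0 \<le> l \<Longrightarrow> l \<le> 1 \<Longrightarrow> 0 \<le> Rlam n l P Q xs"
  unfolding Rlam_def by (rule prod_nonneg) (simp add: mix_pos less_imp_le)

lemma has_sum_Rlam: "0 \<le> l \<Longrightarrow> l \<le> 1 \<Longrightarrow> (Rlam n l P Q has_sum 1) (seqs n)"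
  unfolding Rlam_def
  using has_sum_prod_seqs[of n "\<lambda>i x. l * P i x + (1 - l) * Q i x" "\<lambda>_. 1"] has_sum_mix mix_pos
  by (simp add: less_imp_le)

lemma chanN_channel: "channel_on (chanN n W) (seqs n) (seqs n)"
  by (rule channel_on_chanN) (rule W_channel)

lemma Rlam_div_prodX:
  "Rlam n l P Q xs / prodX n Q xs = (\<Prod>i<n. 1 - l + l * (P i (xs ! i) / Q i (xs ! i)))"
  unfolding Rlam_def prodX_def prod_dividef[symmetric]
  by (rule prod.cong) (use Q_pos in \<open>simp_all add: field_simps less_imp_neq[symmetric]\<close>)

lemma ratio_factor_bounds:
  assumes l: "0 \<le> l" "l \<le> 1" and i: "i < n"
  shows "0 < 1 - l + l * (P i x / Q i x)"
    and "0 \<le> 1 - l + l * (INF x. P i x / Q i x)"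
    and "1 - l + l * (INF x. P i x / Q i x) \<le> 1 - l + l * (P i x / Q i x)"
    and "ereal (1 - l + l * (P i x / Q i x)) \<le> ereal (1 - l) + ereal l * (SUP x. ereal (P i x / Q i x))"
proof -
  have ratio_nn: "0 \<le> P i x / Q i x" for x using P_pos[OF i] Q_pos[OF i] by (simp add: less_imp_le)
  have "0 < (l * P i x + (1 - l) * Q i x) / Q i x" using mix_pos[OF l i] Q_pos[OF i] by simp
  then show "0 < 1 - l + l * (P i x / Q i x)" using Q_pos[OF i, of x] by (simp add: field_simps)
  have "bdd_below (range (\<lambda>x. P i x / Q i x))" using ratio_nn by (intro bdd_belowI) auto
  then have inf_nn: "0 \<le> (INF x. P i x / Q i x)" and inf_le: "(INF x. P i x / Q i x) \<le> P i x / Q i x"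
    using ratio_nn by (auto intro: cINF_lower cINF_greatest)
  have "0 \<le> l * (INF x. P i x / Q i x)" using inf_nn l(1) by simp
  moreover have "l * (INF x. P i x / Q i x) \<le> l * (P i x / Q i x)"
    using inf_le l(1) by (rule mult_left_mono)
  ultimately show "0 \<le> 1 - l + l * (INF x. P i x / Q i x)"
    and "1 - l + l * (INF x. P i x / Q i x) \<le> 1 - l + l * (P i x / Q i x)"
    using l by linarith+
  have "ereal l * ereal (P i x / Q i x) \<le> ereal l * (SUP x. ereal (P i x / Q i x))"
    using l by (intro ereal_mult_left_mono SUP_upper) auto
  then show "ereal (1 - l + l * (P i x / Q i x)) \<le> ereal (1 - l) + ereal l * (SUP x. ereal (P i x / Q i x))"
    by (metis add_left_mono plus_ereal.simps(1) times_ereal.simps(1))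
qed

lemma ratio_mem_Ival:
  assumes "0 \<le> l" "l \<le> 1"
  shows "Rlam n l P Q xs / prodX n Q xs \<in> Ival (xi1 n l P Q) (xi2 n l P Q)"
proof -
  note bounds = ratio_factor_bounds[OF assms]
  have "0 < (\<Prod>i<n. 1 - l + l * (P i (xs ! i) / Q i (xs ! i)))"
    by (rule prod_pos) (use bounds(1) in simp)
  moreover have "(\<Prod>i<n. 1 - l + l * (INF x. P i x / Q i x))
      \<le> (\<Prod>i<n. 1 - l + l * (P i (xs ! i) / Q i (xs ! i)))"
    by (rule prod_mono) (use bounds(2,3) in simp)
  moreover have "(\<Prod>i<n. ereal (1 - l + l * (P i (xs ! i) / Q i (xs ! i))))
      \<le> (\<Prod>i<n. ereal (1 - l) + ereal l * (SUP x. ereal (P i x / Q i x)))"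
  proof (rule prod_mono_ereal)
    fix i assume "i \<in> {..<n}"
    then show "0 \<le> ereal (1 - l + l * (P i (xs ! i) / Q i (xs ! i)))
        \<and> ereal (1 - l + l * (P i (xs ! i) / Q i (xs ! i)))
          \<le> ereal (1 - l) + ereal l * (SUP x. ereal (P i x / Q i x))"
      using bounds(1,4)[of i "xs ! i"] by (simp add: less_imp_le)
  qed
  ultimately show ?thesis
    unfolding Ival_def xi1_def xi2_def Rlam_div_prodX by (simp add: prod_ereal)
qed

lemma one_mem_Ival:
  assumes l: "0 \<le> l" "l \<le> 1"
  shows "1 \<in> Ival (xi1 n l P Q) (xi2 n l P Q)"
proof -
  have "1 - l + l * (INF x. P i x / Q i x) \<le> 1" if i: "i < n" for i
  proof -
    obtain x where "P i x / Q i x \<le> 1"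
      using has_sum_1_ratio_le_1[OF P_sum Q_sum Q_pos] i by blast
    then have "l * (P i x / Q i x) \<le> l * 1" using l(1) by (rule mult_left_mono)
    with ratio_factor_bounds(3)[OF l i, of x] show ?thesis by linarith
  qed
  then have "(\<Prod>i<n. 1 - l + l * (INF x. P i x / Q i x)) \<le> (\<Prod>i<n. 1)"
    using ratio_factor_bounds(2)[OF l] by (intro prod_mono) auto
  moreover have "ereal 1 \<le> ereal (1 - l) + ereal l * (SUP x. ereal (P i x / Q i x))" if i: "i < n" for i
  proof -
    obtain x where "Q i x / P i x \<le> 1"
      using has_sum_1_ratio_le_1[OF Q_sum P_sum P_pos] i by blast
    then have "1 \<le> P i x / Q i x"
      using P_pos[OF i, of x] Q_pos[OF i, of x] by (simp add: divide_le_eq_1 le_divide_eq_1)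
    then have "l * 1 \<le> l * (P i x / Q i x)" using l(1) by (rule mult_left_mono)
    then have "1 \<le> 1 - l + l * (P i x / Q i x)" by linarith
    with ratio_factor_bounds(4)[OF l i, of x] show ?thesis by (metis ereal_less_eq(3) order_trans)
  qed
  then have "(\<Prod>i<n. ereal 1) \<le> (\<Prod>i<n. ereal (1 - l) + ereal l * (SUP x. ereal (P i x / Q i x)))"
    by (intro prod_mono_ereal) auto
  ultimately show ?thesis by (simp add: Ival_def xi1_def xi2_def one_ereal_def)
qed

lemma chi2_letter_data_processing:
  assumes S: "\<forall>i<n. (\<lambda>x. (P i x - Q i x)\<^sup>2 / Q i x) summable_on UNIV" and i: "i < n"
  shows "(\<lambda>y. (chan_out (P i) (W i) UNIV y - chan_out (Q i) (W i) UNIV y)\<^sup>2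
      / chan_out (Q i) (W i) UNIV y) summable_on UNIV"
    and "chi2 (chan_out (P i) (W i) UNIV) (chan_out (Q i) (W i) UNIV) UNIV \<le> chi2 (P i) (Q i) UNIV"
  using chi2_data_processing[OF Q_sum[OF i] Q_pos[OF i] P_sum[OF i] P_pos[OF i] W_channel[OF i]] S i
  by simp_all

lemma chi2_letter_output_nonneg:
  "i < n \<Longrightarrow> 0 \<le> chi2 (chan_out (P i) (W i) UNIV) (chan_out (Q i) (W i) UNIV) UNIV"
  by (rule chi2_nonneg, rule chan_out_nonneg[OF _ W_channel]) (simp_all add: Q_pos less_imp_le)

lemma has_sum_chi2_terms_input:
  assumes l: "0 \<le> l" "l \<le> 1" and S: "\<forall>i<n. (\<lambda>x. (P i x - Q i x)\<^sup>2 / Q i x) summable_on UNIV"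
  shows "((\<lambda>xs. prodX n Q xs * (Rlam n l P Q xs / prodX n Q xs - 1)\<^sup>2)
      has_sum (\<Prod>i<n. 1 + l\<^sup>2 * chi2 (P i) (Q i) UNIV) - 1) (seqs n)"
proof -
  have "((\<lambda>xs. \<Prod>i<n. (l * P i (xs ! i) + (1 - l) * Q i (xs ! i))\<^sup>2 / Q i (xs ! i))
      has_sum (\<Prod>i<n. 1 + l\<^sup>2 * chi2 (P i) (Q i) UNIV)) (seqs n)"
  proof (rule has_sum_prod_seqs)
    fix i x assume i: "i < n"
    show "((\<lambda>x. (l * P i x + (1 - l) * Q i x)\<^sup>2 / Q i x) has_sum 1 + l\<^sup>2 * chi2 (P i) (Q i) UNIV) UNIV"
      by (rule has_sum_mixture_sq_ratio[OF P_sum[OF i] Q_sum[OF i]])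
         (use S i Q_pos[OF i] in \<open>auto simp: less_imp_neq[symmetric]\<close>)
    show "0 \<le> (l * P i x + (1 - l) * Q i x)\<^sup>2 / Q i x" using Q_pos[OF i, of x] by simp
  qed
  then have "((\<lambda>xs. (Rlam n l P Q xs)\<^sup>2 / prodX n Q xs)
      has_sum (\<Prod>i<n. 1 + l\<^sup>2 * chi2 (P i) (Q i) UNIV)) (seqs n)"
    by (simp add: Rlam_def prodX_def prod_power_distrib prod_dividef)
  then show ?thesis
    by (rule has_sum_chi2_terms_of_sq_ratio[OF _ has_sum_Rlam[OF l] has_sum_prodX_Q])
       (use prodX_Q_pos in \<open>simp add: less_imp_neq[symmetric]\<close>)
qed

lemma chan_out_prodX_Q:
  "chan_out (prodX n Q) (chanN n W) (seqs n) ys = (\<Prod>i<n. chan_out (Q i) (W i) UNIV (ys ! i))"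
  unfolding prodX_def
  by (rule chan_out_chanN_prod) (simp_all add: has_sum_imp_summable[OF Q_sum] Q_nonneg W_channel)

lemma chan_out_Rlam:
  assumes l: "0 \<le> l" "l \<le> 1"
  shows "chan_out (Rlam n l P Q) (chanN n W) (seqs n) ys
      = (\<Prod>i<n. l * chan_out (P i) (W i) UNIV (ys ! i) + (1 - l) * chan_out (Q i) (W i) UNIV (ys ! i))"
proof -
  have "chan_out (Rlam n l P Q) (chanN n W) (seqs n) ys
      = (\<Prod>i<n. chan_out (\<lambda>x. l * P i x + (1 - l) * Q i x) (W i) UNIV (ys ! i))"
    unfolding Rlam_def
    by (rule chan_out_chanN_prod)
       (simp_all add: has_sum_imp_summable[OF has_sum_mix] mix_pos l less_imp_le W_channel)
  also have "\<dots> = (\<Prod>i<n. l * chan_out (P i) (W i) UNIV (ys ! i) + (1 - l) * chan_out (Q i) (W i) UNIV (ys ! i))"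
    by (intro prod.cong refl chan_out_lincomb[where B=UNIV])
       (simp_all add: has_sum_imp_summable[OF P_sum] has_sum_imp_summable[OF Q_sum] P_nonneg Q_nonneg
         W_channel)
  finally show ?thesis .
qed

lemma has_sum_chi2_terms_output:
  assumes l: "0 \<le> l" "l \<le> 1" and S: "\<forall>i<n. (\<lambda>x. (P i x - Q i x)\<^sup>2 / Q i x) summable_on UNIV"
  shows "((\<lambda>ys. chan_out (prodX n Q) (chanN n W) (seqs n) ys
        * (chan_out (Rlam n l P Q) (chanN n W) (seqs n) ys
           / chan_out (prodX n Q) (chanN n W) (seqs n) ys - 1)\<^sup>2)
      has_sum (\<Prod>i<n. 1 + l\<^sup>2 * chi2 (chan_out (P i) (W i) UNIV) (chan_out (Q i) (W i) UNIV) UNIV) - 1)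
      (seqs n)"
proof -
  define qy ry where "qy = chan_out (prodX n Q) (chanN n W) (seqs n)"
    and "ry = chan_out (Rlam n l P Q) (chanN n W) (seqs n)"
  define PY QY where "PY i = chan_out (P i) (W i) UNIV" and "QY i = chan_out (Q i) (W i) UNIV" for i
  have QY_nn: "0 \<le> QY i y" if "i < n" for i y
    unfolding QY_def by (rule chan_out_nonneg[OF Q_nonneg[OF that] W_channel[OF that]]) simp_all
  have QY_0: "PY i y = 0" if i: "i < n" and "QY i y = 0" for i y
    using chan_out_eq_0[OF has_sum_imp_summable[OF Q_sum[OF i]] Q_pos[OF i]
        has_sum_imp_summable[OF P_sum[OF i]] P_nonneg[OF i] W_channel[OF i] UNIV_I] that(2)
    by (simp add: PY_def QY_def)
  have "((\<lambda>y. (l * PY i y + (1 - l) * QY i y)\<^sup>2 / QY i y)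
      has_sum 1 + l\<^sup>2 * chi2 (PY i) (QY i) UNIV) UNIV" if i: "i < n" for i
    by (rule has_sum_mixture_sq_ratio)
       (use chi2_letter_data_processing(1)[OF S i] QY_0[OF i]
         has_sum_chan_out[OF P_sum[OF i] _ W_channel[OF i]] has_sum_chan_out[OF Q_sum[OF i] _ W_channel[OF i]]
         P_nonneg[OF i] Q_nonneg[OF i] in \<open>simp_all add: PY_def QY_def\<close>)
  then have "((\<lambda>ys. \<Prod>i<n. (l * PY i (ys ! i) + (1 - l) * QY i (ys ! i))\<^sup>2 / QY i (ys ! i))
      has_sum (\<Prod>i<n. 1 + l\<^sup>2 * chi2 (PY i) (QY i) UNIV)) (seqs n)"
    by (rule has_sum_prod_seqs) (auto intro!: divide_nonneg_nonneg QY_nn)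
  then have "((\<lambda>ys. (ry ys)\<^sup>2 / qy ys) has_sum (\<Prod>i<n. 1 + l\<^sup>2 * chi2 (PY i) (QY i) UNIV)) (seqs n)"
    by (simp add: ry_def qy_def chan_out_Rlam[OF l] chan_out_prodX_Q PY_def QY_def
        prod_power_distrib prod_dividef)
  moreover have "(ry has_sum 1) (seqs n)" unfolding ry_def
    by (rule has_sum_chan_out[OF has_sum_Rlam[OF l] _ chanN_channel]) (rule Rlam_nonneg[OF l])
  moreover have "(qy has_sum 1) (seqs n)" unfolding qy_def
    by (rule has_sum_chan_out[OF has_sum_prodX_Q _ chanN_channel]) (simp add: prodX_Q_pos less_imp_le)
  moreover have "ry ys = 0" if "ys \<in> seqs n" "qy ys = 0" for ys
    using chan_out_eq_0[OF has_sum_imp_summable[OF has_sum_prodX_Q] prodX_Q_pos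
        has_sum_imp_summable[OF has_sum_Rlam[OF l]] Rlam_nonneg[OF l] chanN_channel that(1)] that(2)
    by (simp add: qy_def ry_def)
  ultimately show ?thesis
    unfolding qy_def[symmetric] ry_def[symmetric] PY_def[symmetric] QY_def[symmetric]
    by (rule has_sum_chi2_terms_of_sq_ratio)
qed

lemma Ival_subset_Icc:
  assumes B: "\<forall>i<n. bdd_above (range (\<lambda>x. P i x / Q i x))" and l: "0 \<le> l" "l \<le> 1"
  shows "Ival (xi1 n l P Q) (xi2 n l P Q)
      \<subseteq> {(\<Prod>i<n. 1 - l + l * (INF x. P i x / Q i x)) .. (\<Prod>i<n. 1 - l + l * (SUP x. P i x / Q i x))}"
proof -
  have "xi2 n l P Q \<le> ereal (\<Prod>i<n. 1 - l + l * (SUP x. P i x / Q i x))"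
    unfolding xi2_def prod_ereal[symmetric]
  proof (rule prod_mono_ereal)
    fix i assume "i \<in> {..<n}"
    then have i: "i < n" by simp
    have "P i x / Q i x \<le> (SUP x. P i x / Q i x)" for x
      using B i by (auto intro: cSUP_upper)
    then have "(SUP x. ereal (P i x / Q i x)) \<le> ereal (SUP x. P i x / Q i x)"
      by (intro SUP_least) simp
    then have "ereal l * (SUP x. ereal (P i x / Q i x)) \<le> ereal l * ereal (SUP x. P i x / Q i x)"
      using l by (intro ereal_mult_left_mono) auto
    then have "ereal (1 - l) + ereal l * (SUP x. ereal (P i x / Q i x))
        \<le> ereal (1 - l + l * (SUP x. P i x / Q i x))"
      by (metis add_left_mono plus_ereal.simps(1) times_ereal.simps(1))
    moreover have "0 \<le> ereal (1 - l) + ereal l * (SUP x. ereal (P i x / Q i x))"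
      using ratio_factor_bounds(1,4)[OF l i, of undefined] by (meson ereal_less_eq(5) less_imp_le order_trans)
    ultimately show "0 \<le> ereal (1 - l) + ereal l * (SUP x. ereal (P i x / Q i x))
        \<and> ereal (1 - l) + ereal l * (SUP x. ereal (P i x / Q i x))
          \<le> ereal (1 - l + l * (SUP x. P i x / Q i x))" by blast
  qed
  then show ?thesis unfolding Ival_def xi1_def
    by (auto dest: order_trans[where z = "ereal (\<Prod>i<n. 1 - l + l * (SUP x. P i x / Q i x))"])
qed

lemma eventually_Ival_near_1:
  assumes B: "\<forall>i<n. bdd_above (range (\<lambda>x. P i x / Q i x))" and d: "0 < d"
  shows "eventually (\<lambda>l. 1 \<in> Ival (xi1 n l P Q) (xi2 n l P Q)
      \<and> (\<forall>t\<in>Ival (xi1 n l P Q) (xi2 n l P Q). \<bar>t - 1\<bar> < d)) (at_right 0)"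
proof -
  have "((\<lambda>l. \<Prod>i<n. 1 - l + l * (INF x. P i x / Q i x)) \<longlongrightarrow> (\<Prod>i<n. 1 - 0 + 0 * (INF x. P i x / Q i x))) (at_right 0)"
    and "((\<lambda>l. \<Prod>i<n. 1 - l + l * (SUP x. P i x / Q i x)) \<longlongrightarrow> (\<Prod>i<n. 1 - 0 + 0 * (SUP x. P i x / Q i x))) (at_right 0)"
    by (intro tendsto_intros)+
  then have "eventually (\<lambda>l. 1 - d < (\<Prod>i<n. 1 - l + l * (INF x. P i x / Q i x))) (at_right 0)"
    and "eventually (\<lambda>l. (\<Prod>i<n. 1 - l + l * (SUP x. P i x / Q i x)) < 1 + d) (at_right 0)"
    using d by (auto intro: order_tendstoD)
  moreover have "eventually (\<lambda>l. 0 < l \<and> l < 1) (at_right (0::real))"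
    unfolding eventually_at_right_field by (rule exI[of _ 1]) auto
  ultimately show ?thesis
  proof eventually_elim
    case (elim l)
    then have "\<bar>t - 1\<bar> < d" if "t \<in> Ival (xi1 n l P Q) (xi2 n l P Q)" for t
      using Ival_subset_Icc[OF B, of l] that by fastforce
    then show ?case using one_mem_Ival elim by simp
  qed
qed

lemma tendsto_chi_bracket_div_sq:
  "((\<lambda>l. chi_bracket n l P Q W / l\<^sup>2) \<longlongrightarrow> chi_sum n P Q W) (at_right 0)"
proof -
  have "((\<lambda>l. ((\<Prod>i<n. 1 + l\<^sup>2 * chi2 (P i) (Q i) UNIV) - 1) / l\<^sup>2
        - ((\<Prod>i<n. 1 + l\<^sup>2 * chi2 (chan_out (P i) (W i) UNIV) (chan_out (Q i) (W i) UNIV) UNIV) - 1) / l\<^sup>2)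
      \<longlongrightarrow> (\<Sum>i<n. chi2 (P i) (Q i) UNIV)
        - (\<Sum>i<n. chi2 (chan_out (P i) (W i) UNIV) (chan_out (Q i) (W i) UNIV) UNIV)) (at_right 0)"
    by (intro tendsto_diff tendsto_prod_one_plus_sq_minus_one_div_sq)
  then show ?thesis by (simp add: chi_bracket_def chi_sum_def sum_subtractf diff_divide_distrib)
qed

end

locale product_channel_divergence = product_channel P Q W n
  for P Q :: "nat \<Rightarrow> 'x::countable \<Rightarrow> real" and W :: "nat \<Rightarrow> 'x \<Rightarrow> 'y::countable \<Rightarrow> real" and n +
  fixes f :: "real \<Rightarrow> real"
  assumes cvx: "convex_on {0<..} f"
    and diff: "\<forall>t>0. f differentiable (at t) \<and> deriv f differentiable (at t)"
    and f1: "f 1 = 0"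
begin

lemma deriv_f: "0 < t \<Longrightarrow> (f has_real_derivative deriv f t) (at t)"
  and deriv2_f: "0 < t \<Longrightarrow> (deriv f has_real_derivative deriv2 f t) (at t)"
  using diff DERIV_deriv_iff_real_differentiable by (auto simp: deriv2_def)

lemma deriv2_f_nonneg: "0 < t \<Longrightarrow> 0 \<le> deriv2 f t"
  by (rule deriv2_nonneg_of_convex_on[OF cvx diff])

lemma fdiv_gap_compare:
  assumes l: "0 \<le> l" "l \<le> 1"
    and S: "\<forall>i<n. (\<lambda>x. (P i x - Q i x)\<^sup>2 / Q i x) summable_on UNIV"
    and F: "(\<lambda>xs. prodX n Q xs * f (Rlam n l P Q xs / prodX n Q xs)) summable_on seqs n"
    and \<sigma>: "\<sigma> \<noteq> 0"
    and \<kappa>: "\<And>t. t \<in> Ival (xi1 n l P Q) (xi2 n l P Q) \<Longrightarrow> 0 \<le> \<sigma> * (deriv2 f t - 2 * \<kappa>)"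
  shows "\<sigma> * (\<kappa> * chi_bracket n l P Q W) \<le> \<sigma> * Dgap f n l P Q W"
  using fdiv_gap_compare_chi2_gap[OF has_sum_prodX_Q prodX_Q_pos has_sum_Rlam[OF l] chanN_channel
      ratio_mem_Ival[OF l] one_mem_Ival[OF l] has_sum_chi2_terms_input[OF l S]
      has_sum_chi2_terms_output[OF l S] F f1 deriv_f deriv2_f \<sigma> \<kappa>]
  by (simp add: Dgap_def chi_bracket_def)

lemma Dgap_lower_bound:
  assumes l: "0 \<le> l" "l \<le> 1"
    and S: "\<forall>i<n. (\<lambda>x. (P i x - Q i x)\<^sup>2 / Q i x) summable_on UNIV"
    and F: "(\<lambda>xs. prodX n Q xs * f (Rlam n l P Q xs / prodX n Q xs)) summable_on seqs n"
  shows "c_f f (xi1 n l P Q) (xi2 n l P Q) * chi_bracket n l P Q W \<le> Dgap f n l P Q W"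
proof -
  have "1 * (c_f f (xi1 n l P Q) (xi2 n l P Q) * chi_bracket n l P Q W) \<le> 1 * Dgap f n l P Q W"
    by (rule fdiv_gap_compare[OF l S F]) (use c_f_le_deriv2[OF deriv2_f_nonneg] in force)+
  then show ?thesis by simp
qed

lemma Dgap_upper_bound:
  assumes l: "0 \<le> l" "l \<le> 1"
    and S: "\<forall>i<n. (\<lambda>x. (P i x - Q i x)\<^sup>2 / Q i x) summable_on UNIV"
    and F: "(\<lambda>xs. prodX n Q xs * f (Rlam n l P Q xs / prodX n Q xs)) summable_on seqs n"
    and fin: "e_f f (xi1 n l P Q) (xi2 n l P Q) < \<infinity>"
  shows "ereal (Dgap f n l P Q W) \<le> e_f f (xi1 n l P Q) (xi2 n l P Q) * ereal (chi_bracket n l P Q W)"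
proof -
  obtain e where e: "e_f f (xi1 n l P Q) (xi2 n l P Q) = ereal e"
    and le: "\<And>t. t \<in> Ival (xi1 n l P Q) (xi2 n l P Q) \<Longrightarrow> deriv2 f t / 2 \<le> e"
    using e_f_finite[OF deriv2_f_nonneg one_mem_Ival[OF l] fin] by blast
  have "-1 * (e * chi_bracket n l P Q W) \<le> -1 * Dgap f n l P Q W"
    by (rule fdiv_gap_compare[OF l S F]) (use le in force)+
  then show ?thesis by (simp add: e)
qed

lemma chi_bracket_ge:
  assumes S: "\<forall>i<n. (\<lambda>x. (P i x - Q i x)\<^sup>2 / Q i x) summable_on UNIV"
  shows "l\<^sup>2 * chi_sum n P Q W \<le> chi_bracket n l P Q W"
proof -
  have "(\<Sum>i<n. l\<^sup>2 * chi2 (P i) (Q i) UNIV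
      - l\<^sup>2 * chi2 (chan_out (P i) (W i) UNIV) (chan_out (Q i) (W i) UNIV) UNIV) \<le> chi_bracket n l P Q W"
    unfolding chi_bracket_def
    by (rule sum_diff_le_prod_one_plus_diff)
       (simp add: chi2_letter_data_processing(2)[OF S] chi2_letter_output_nonneg mult_left_mono)
  then show ?thesis by (simp add: chi_sum_def sum_distrib_left right_diff_distrib)
qed

lemma chi_sum_nonneg:
  assumes S: "\<forall>i<n. (\<lambda>x. (P i x - Q i x)\<^sup>2 / Q i x) summable_on UNIV"
  shows "0 \<le> chi_sum n P Q W"
  unfolding chi_sum_def by (rule sum_nonneg) (simp add: chi2_letter_data_processing(2)[OF S])

lemma summable_input_fdiv_terms:
  assumes B: "\<forall>i<n. bdd_above (range (\<lambda>x. P i x / Q i x))" and l: "0 \<le> l" "l < 1"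
  shows "(\<lambda>xs. prodX n Q xs * f (Rlam n l P Q xs / prodX n Q xs)) summable_on seqs n"
proof -
  define lo hi where "lo = (\<Prod>i<n. 1 - l + l * (INF x. P i x / Q i x))"
    and "hi = (\<Prod>i<n. 1 - l + l * (SUP x. P i x / Q i x))"
  have "0 \<le> (INF x. P i x / Q i x)" if "i < n" for i
    by (rule cINF_greatest) (simp_all add: P_pos Q_pos that less_imp_le)
  then have "0 < lo" unfolding lo_def
    by (intro prod_pos add_pos_nonneg mult_nonneg_nonneg) (use l in auto)
  have "continuous_on {lo..hi} f"
  proof (rule continuous_at_imp_continuous_on, rule ballI)
    fix t assume "t \<in> {lo..hi}"
    with \<open>0 < lo\<close> have "f differentiable (at t)" using diff by simp
    then show "isCont f t" by (rule differentiable_imp_continuous_within)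
  qed
  then have "bounded (f ` {lo..hi})"
    by (rule compact_imp_bounded[OF compact_continuous_image[OF _ compact_Icc]])
  then obtain M where M: "\<And>t. t \<in> {lo..hi} \<Longrightarrow> \<bar>f t\<bar> \<le> M"
    unfolding bounded_iff by (auto simp del: atLeastAtMost_iff)
  have "Ival (xi1 n l P Q) (xi2 n l P Q) \<subseteq> {lo..hi}"
    unfolding lo_def hi_def by (rule Ival_subset_Icc[OF B l(1) less_imp_le[OF l(2)]])
  then have ratio: "Rlam n l P Q xs / prodX n Q xs \<in> {lo..hi}" for xs
    by (rule subsetD) (rule ratio_mem_Ival[OF l(1) less_imp_le[OF l(2)]])
  have "(\<lambda>xs. M * prodX n Q xs) summable_on seqs n"
    by (rule summable_on_cmult_right[OF has_sum_imp_summable[OF has_sum_prodX_Q]])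
  then have "Infinite_Sum.abs_summable_on (\<lambda>xs. M * prodX n Q xs) (seqs n)"
    by (rule summable_on_iff_abs_summable_on_real[THEN iffD1])
  then have "Infinite_Sum.abs_summable_on (\<lambda>xs. prodX n Q xs * f (Rlam n l P Q xs / prodX n Q xs)) (seqs n)"
  proof (rule Infinite_Sum.abs_summable_on_comparison_test)
    fix xs
    have "prodX n Q xs * \<bar>f (Rlam n l P Q xs / prodX n Q xs)\<bar> \<le> prodX n Q xs * M"
      using M[OF ratio] prodX_Q_pos[of xs] by (intro mult_left_mono) auto
    also have "\<dots> \<le> norm (M * prodX n Q xs)" by (simp add: mult.commute)
    finally show "norm (prodX n Q xs * f (Rlam n l P Q xs / prodX n Q xs)) \<le> norm (M * prodX n Q xs)"
      using prodX_Q_pos[of xs] by (simp add: abs_mult)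
  qed
  then show ?thesis by (rule summable_on_iff_abs_summable_on_real[THEN iffD2])
qed

lemma tendsto_c_f:
  assumes B: "\<forall>i<n. bdd_above (range (\<lambda>x. P i x / Q i x))" and C: "isCont (deriv2 f) 1"
  shows "((\<lambda>l. c_f f (xi1 n l P Q) (xi2 n l P Q)) \<longlongrightarrow> 1/2 * deriv2 f 1) (at_right 0)"
  unfolding c_f_def
  by (intro tendsto_mult tendsto_const tendsto_INF_shrinking[OF C] eventually_Ival_near_1[OF B])

lemma tendsto_e_f:
  assumes B: "\<forall>i<n. bdd_above (range (\<lambda>x. P i x / Q i x))" and C: "isCont (deriv2 f) 1"
  shows "((\<lambda>l. e_f f (xi1 n l P Q) (xi2 n l P Q)) \<longlongrightarrow> ereal (1/2 * deriv2 f 1)) (at_right 0)"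
proof -
  have "((\<lambda>l. ereal (1/2) * (SUP t\<in>Ival (xi1 n l P Q) (xi2 n l P Q). ereal (deriv2 f t)))
      \<longlongrightarrow> ereal (1/2) * ereal (deriv2 f 1)) (at_right 0)"
    by (intro tendsto_cmult_ereal tendsto_SUP_ereal_shrinking[OF C] eventually_Ival_near_1[OF B]) simp_all
  then show ?thesis by (simp add: e_f_def)
qed

lemma chi2_terms_summable_of_bounded_ratio:
  assumes B: "\<forall>i<n. bdd_above (range (\<lambda>x. P i x / Q i x))"
  shows "\<forall>i<n. (\<lambda>x. (P i x - Q i x)\<^sup>2 / Q i x) summable_on UNIV"
proof (intro allI impI)
  fix i assume i: "i < n"
  have "P i x / Q i x \<le> (SUP x. P i x / Q i x)" for x
    using B i by (auto intro: cSUP_upper)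
  then show "(\<lambda>x. (P i x - Q i x)\<^sup>2 / Q i x) summable_on UNIV"
    by (rule chi2_summable_of_bounded_ratio[OF has_sum_imp_summable[OF Q_sum[OF i]] Q_pos[OF i]
          less_imp_le[OF P_pos[OF i]]])
qed

lemma Dgap_div_sq_bounds:
  assumes B: "\<forall>i<n. bdd_above (range (\<lambda>x. P i x / Q i x))" and l: "0 < l" "l < 1"
    and fin: "e_f f (xi1 n l P Q) (xi2 n l P Q) < \<infinity>"
  shows "ereal (c_f f (xi1 n l P Q) (xi2 n l P Q) * (chi_bracket n l P Q W / l\<^sup>2))
      \<le> ereal (Dgap f n l P Q W / l\<^sup>2)"
    and "ereal (Dgap f n l P Q W / l\<^sup>2)
      \<le> e_f f (xi1 n l P Q) (xi2 n l P Q) * ereal (chi_bracket n l P Q W / l\<^sup>2)"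
proof -
  from l have l': "0 \<le> l" "l \<le> 1" by auto
  note S = chi2_terms_summable_of_bounded_ratio[OF B]
  have F: "(\<lambda>xs. prodX n Q xs * f (Rlam n l P Q xs / prodX n Q xs)) summable_on seqs n"
    using l by (intro summable_input_fdiv_terms[OF B]) auto
  obtain e where e: "e_f f (xi1 n l P Q) (xi2 n l P Q) = ereal e"
    using e_f_finite[OF deriv2_f_nonneg one_mem_Ival[OF l'] fin] by blast
  have "c_f f (xi1 n l P Q) (xi2 n l P Q) * chi_bracket n l P Q W \<le> Dgap f n l P Q W"
    by (rule Dgap_lower_bound[OF l' S F])
  moreover have "Dgap f n l P Q W \<le> e * chi_bracket n l P Q W"
    using Dgap_upper_bound[OF l' S F fin] by (simp add: e)
  ultimately show "ereal (c_f f (xi1 n l P Q) (xi2 n l P Q) * (chi_bracket n l P Q W / l\<^sup>2))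
      \<le> ereal (Dgap f n l P Q W / l\<^sup>2)"
    and "ereal (Dgap f n l P Q W / l\<^sup>2)
      \<le> e_f f (xi1 n l P Q) (xi2 n l P Q) * ereal (chi_bracket n l P Q W / l\<^sup>2)"
    by (simp_all add: e divide_right_mono)
qed

lemma tendsto_Dgap_div_sq:
  assumes C: "isCont (deriv2 f) 1" and B: "\<forall>i<n. bdd_above (range (\<lambda>x. P i x / Q i x))"
  defines "T \<equiv> 1/2 * deriv2 f 1 * chi_sum n P Q W"
  shows "((\<lambda>l. Dgap f n l P Q W / l\<^sup>2) \<longlongrightarrow> T) (at_right 0)"
    and "((\<lambda>l. c_f f (xi1 n l P Q) (xi2 n l P Q) * chi_bracket n l P Q W / l\<^sup>2) \<longlongrightarrow> T) (at_right 0)"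
    and "((\<lambda>l. c_f f (xi1 n l P Q) (xi2 n l P Q) * l\<^sup>2 * chi_sum n P Q W / l\<^sup>2) \<longlongrightarrow> T) (at_right 0)"
    and "((\<lambda>l. e_f f (xi1 n l P Q) (xi2 n l P Q) * ereal (chi_bracket n l P Q W / l\<^sup>2))
          \<longlongrightarrow> ereal T) (at_right 0)"
proof -
  define c e cb where "c l = c_f f (xi1 n l P Q) (xi2 n l P Q)"
    and "e l = e_f f (xi1 n l P Q) (xi2 n l P Q)" and "cb l = chi_bracket n l P Q W" for l
  have c_lim: "(c \<longlongrightarrow> 1/2 * deriv2 f 1) (at_right 0)"
    unfolding c_def[abs_def] by (rule tendsto_c_f[OF B C])
  have e_lim: "(e \<longlongrightarrow> ereal (1/2 * deriv2 f 1)) (at_right 0)"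
    unfolding e_def[abs_def] by (rule tendsto_e_f[OF B C])
  have cb_lim: "((\<lambda>l. cb l / l\<^sup>2) \<longlongrightarrow> chi_sum n P Q W) (at_right 0)"
    unfolding cb_def by (rule tendsto_chi_bracket_div_sq)
  have lower_lim: "((\<lambda>l. c l * (cb l / l\<^sup>2)) \<longlongrightarrow> T) (at_right 0)"
    unfolding T_def by (rule tendsto_mult[OF c_lim cb_lim])
  have upper_lim: "((\<lambda>l. e l * ereal (cb l / l\<^sup>2)) \<longlongrightarrow> ereal T) (at_right 0)"
    using tendsto_mult_ereal[OF e_lim tendsto_ereal[OF cb_lim]] by (simp add: T_def)
  have "eventually (\<lambda>l. e l < \<infinity>) (at_right 0)"
    by (rule order_tendstoD(2)[OF e_lim]) simp
  moreover have "eventually (\<lambda>l. 0 < l \<and> l < 1) (at_right (0::real))"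
    unfolding eventually_at_right_field by (rule exI[of _ 1]) auto
  ultimately have bounds: "eventually (\<lambda>l. ereal (c l * (cb l / l\<^sup>2)) \<le> ereal (Dgap f n l P Q W / l\<^sup>2)
      \<and> ereal (Dgap f n l P Q W / l\<^sup>2) \<le> e l * ereal (cb l / l\<^sup>2)) (at_right 0)"
  proof eventually_elim
    case (elim l)
    then have "0 < l" "l < 1" "e_f f (xi1 n l P Q) (xi2 n l P Q) < \<infinity>" by (auto simp: e_def)
    from Dgap_div_sq_bounds[OF B this] show ?case by (simp only: c_def e_def cb_def)
  qed
  \<comment> \<open>The squeeze is done in \<open>ereal\<close> since \<open>e\<^sub>f\<close> is only eventually finite.\<close>
  have "((\<lambda>l. ereal (Dgap f n l P Q W / l\<^sup>2)) \<longlongrightarrow> ereal T) (at_right 0)"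
    by (rule tendsto_sandwich[OF _ _ tendsto_ereal[OF lower_lim] upper_lim])
       (rule eventually_mono[OF bounds], blast)+
  then show "((\<lambda>l. Dgap f n l P Q W / l\<^sup>2) \<longlongrightarrow> T) (at_right 0)" by simp
  show "((\<lambda>l. c_f f (xi1 n l P Q) (xi2 n l P Q) * chi_bracket n l P Q W / l\<^sup>2) \<longlongrightarrow> T) (at_right 0)"
    using lower_lim by (simp add: c_def cb_def)
  have "eventually (\<lambda>l. c l * chi_sum n P Q W = c l * l\<^sup>2 * chi_sum n P Q W / l\<^sup>2) (at_right (0::real))"
    using eventually_at_right_less[of "0::real"] by eventually_elim simp
  with tendsto_mult[OF c_lim tendsto_const[of "chi_sum n P Q W"]]
  show "((\<lambda>l. c_f f (xi1 n l P Q) (xi2 n l P Q) * l\<^sup>2 * chi_sum n P Q W / l\<^sup>2) \<longlongrightarrow> T) (at_right 0)"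
    unfolding c_def T_def by (rule tendsto_cong[THEN iffD1, rotated])
  show "((\<lambda>l. e_f f (xi1 n l P Q) (xi2 n l P Q) * ereal (chi_bracket n l P Q W / l\<^sup>2))
      \<longlongrightarrow> ereal T) (at_right 0)"
    using upper_lim by (simp add: e_def cb_def)
qed

end

theorem theorem2:
  fixes P Q :: "nat \<Rightarrow> 'x::countable \<Rightarrow> real"
    and W :: "nat \<Rightarrow> 'x \<Rightarrow> 'y::countable \<Rightarrow> real"
    and n :: nat
    and f :: "real \<Rightarrow> real"
  assumes pmfP: "\<forall>i<n. is_pmf (P i) \<and> (\<forall>x. 0 < P i x)"
    and pmfQ: "\<forall>i<n. is_pmf (Q i) \<and> (\<forall>x. 0 < Q i x)"
    and chan: "\<forall>i<n. \<forall>x. is_pmf (W i x)"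
    and cvx: "convex_on {0<..} f"
    and diff: "\<forall>t>0. f differentiable (at t) \<and> deriv f differentiable (at t)"
    and f1: "f 1 = 0"
  shows
    "(\<forall>l\<in>{0..1}.
        ((\<forall>i<n. (\<lambda>x. (P i x - Q i x)\<^sup>2 / Q i x) summable_on UNIV)
         \<and> (\<lambda>xs. prodX n Q xs * f (Rlam n l P Q xs / prodX n Q xs)) summable_on seqs n)
        \<longrightarrow>
          Dgap f n l P Q W \<ge> c_f f (xi1 n l P Q) (xi2 n l P Q) * chi_bracket n l P Q W
        \<and> c_f f (xi1 n l P Q) (xi2 n l P Q) * chi_bracket n l P Q W
            \<ge> c_f f (xi1 n l P Q) (xi2 n l P Q) * l\<^sup>2 * chi_sum n P Q W
        \<and> c_f f (xi1 n l P Q) (xi2 n l P Q) * l\<^sup>2 * chi_sum n P Q W \<ge> 0)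
   \<and> (\<forall>l\<in>{0..1}.
        ((\<forall>i<n. (\<lambda>x. (P i x - Q i x)\<^sup>2 / Q i x) summable_on UNIV)
         \<and> (\<lambda>xs. prodX n Q xs * f (Rlam n l P Q xs / prodX n Q xs)) summable_on seqs n
         \<and> e_f f (xi1 n l P Q) (xi2 n l P Q) < \<infinity>)
        \<longrightarrow>
          ereal (Dgap f n l P Q W)
            \<le> e_f f (xi1 n l P Q) (xi2 n l P Q) * ereal (chi_bracket n l P Q W))
   \<and> ((isCont (deriv2 f) 1 \<and> (\<forall>i<n. bdd_above (range (\<lambda>x. P i x / Q i x))))
      \<longrightarrow>
          ((\<lambda>l. Dgap f n l P Q W / l\<^sup>2)
              \<longlongrightarrow> (1/2) * deriv2 f 1 * chi_sum n P Q W) (at_right 0)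
        \<and> ((\<lambda>l. c_f f (xi1 n l P Q) (xi2 n l P Q) * chi_bracket n l P Q W / l\<^sup>2)
              \<longlongrightarrow> (1/2) * deriv2 f 1 * chi_sum n P Q W) (at_right 0)
        \<and> ((\<lambda>l. c_f f (xi1 n l P Q) (xi2 n l P Q) * l\<^sup>2 * chi_sum n P Q W / l\<^sup>2)
              \<longlongrightarrow> (1/2) * deriv2 f 1 * chi_sum n P Q W) (at_right 0)
        \<and> ((\<lambda>l. e_f f (xi1 n l P Q) (xi2 n l P Q) * ereal (chi_bracket n l P Q W / l\<^sup>2))
              \<longlongrightarrow> ereal ((1/2) * deriv2 f 1 * chi_sum n P Q W)) (at_right 0))"
proof -
  interpret product_channel_divergence P Q W n f
    by unfold_locales (use pmfP pmfQ chan cvx diff f1 in auto)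
  have part_a: "Dgap f n l P Q W \<ge> c_f f (xi1 n l P Q) (xi2 n l P Q) * chi_bracket n l P Q W
      \<and> c_f f (xi1 n l P Q) (xi2 n l P Q) * chi_bracket n l P Q W
          \<ge> c_f f (xi1 n l P Q) (xi2 n l P Q) * l\<^sup>2 * chi_sum n P Q W
      \<and> c_f f (xi1 n l P Q) (xi2 n l P Q) * l\<^sup>2 * chi_sum n P Q W \<ge> 0"
    if l: "l \<in> {0..1}" and S: "\<forall>i<n. (\<lambda>x. (P i x - Q i x)\<^sup>2 / Q i x) summable_on UNIV"
      and F: "(\<lambda>xs. prodX n Q xs * f (Rlam n l P Q xs / prodX n Q xs)) summable_on seqs n" for l
  proof -
    have l: "0 \<le> l" "l \<le> 1" using l by auto
    have "0 \<le> c_f f (xi1 n l P Q) (xi2 n l P Q)"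
      by (rule c_f_nonneg[OF deriv2_f_nonneg one_mem_Ival[OF l]])
    then show ?thesis
      using Dgap_lower_bound[OF l S F] mult_left_mono[OF chi_bracket_ge[OF S]] chi_sum_nonneg[OF S]
      by (simp add: mult.assoc)
  qed
  have part_b: "ereal (Dgap f n l P Q W)
      \<le> e_f f (xi1 n l P Q) (xi2 n l P Q) * ereal (chi_bracket n l P Q W)"
    if "l \<in> {0..1}" and "\<forall>i<n. (\<lambda>x. (P i x - Q i x)\<^sup>2 / Q i x) summable_on UNIV"
      and "(\<lambda>xs. prodX n Q xs * f (Rlam n l P Q xs / prodX n Q xs)) summable_on seqs n"
      and "e_f f (xi1 n l P Q) (xi2 n l P Q) < \<infinity>" for l
    using that by (intro Dgap_upper_bound) auto
  show ?thesis
    by (intro conjI ballI impI; elim conjE; (rule tendsto_Dgap_div_sq; assumption)?; simp add: part_a part_b)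
qed

end
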